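(* Every orthogonal polygon $P$ without holes that has at most $k$ knobs and no non-knob convex vertex has at most $4k-4$ vertices.
   Context: $P$ is a simple polygon with integer vertex coordinates and axis-parallel edges. A vertex is convex if its interior angle is $90^\circ$ and concave if it is $270^\circ$. A knob is an edge both of whose endpoints are convex vertices. A convex vertex is non-knob if neither of its two incident edges is a knob (equivalently, both its neighbouring vertices are concave). *)

theory Defs
  imports "HOL-Analysis.Analysis"
begin

text \<open>An orthogonal polygon is given by the cyclic list of its vertices
  P!0, ..., P!(n-1) (integer coordinates); edge i joins P!i and P!((i+1) mod n).\<close>

definition vtx :: "(int \<times> int) list \<Rightarrow> int \<Rightarrow> int \<times> int" where
  "vtx P i = P ! nat (i mod int (length P))"

definition to_real :: "int \<times> int \<Rightarrow> real \<times> real" where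
  "to_real p = (real_of_int (fst p), real_of_int (snd p))"

definition edge_seg :: "(int \<times> int) list \<Rightarrow> nat \<Rightarrow> (real \<times> real) set" where
  "edge_seg P i = closed_segment (to_real (vtx P (int i))) (to_real (vtx P (int i + 1)))"

definition horiz_edge :: "(int \<times> int) list \<Rightarrow> nat \<Rightarrow> bool" where
  "horiz_edge P i \<longleftrightarrow> snd (vtx P (int i)) = snd (vtx P (int i + 1))
                     \<and> fst (vtx P (int i)) \<noteq> fst (vtx P (int i + 1))"

definition vert_edge :: "(int \<times> int) list \<Rightarrow> nat \<Rightarrow> bool" where
  "vert_edge P i \<longleftrightarrow> fst (vtx P (int i)) = fst (vtx P (int i + 1))
                     \<and> snd (vtx P (int i)) \<noteq> snd (vtx P (int i + 1))"

definition simple_orth_polygon :: "(int \<times> int) list \<Rightarrow> bool" where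
  "simple_orth_polygon P \<longleftrightarrow>
     (let n = length P in
      n \<ge> 4 \<and> distinct P \<and>
      (\<forall>i<n. (horiz_edge P i \<and> vert_edge P ((i+1) mod n)) \<or>
             (vert_edge P i \<and> horiz_edge P ((i+1) mod n))) \<and>
      (\<forall>i<n. edge_seg P i \<inter> edge_seg P ((i+1) mod n) = {to_real (vtx P (int i + 1))}) \<and>
      (\<forall>i<n. \<forall>j<n. i \<noteq> j \<and> j \<noteq> (i+1) mod n \<and> i \<noteq> (j+1) mod n
              \<longrightarrow> edge_seg P i \<inter> edge_seg P j = {}))"

text \<open>Twice the signed (shoelace) area; positive iff counterclockwise.\<close>
definition signed_area2 :: "(int \<times> int) list \<Rightarrow> int" where
  "signed_area2 P = (\<Sum>i<length P. fst (vtx P (int i)) * snd (vtx P (int i + 1))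
                                    - fst (vtx P (int i + 1)) * snd (vtx P (int i)))"

definition turn :: "(int \<times> int) list \<Rightarrow> int \<Rightarrow> int" where
  "turn P i = (let a = vtx P (i - 1); b = vtx P i; c = vtx P (i + 1) in
     (fst b - fst a) * (snd c - snd b) - (snd b - snd a) * (fst c - fst b))"

text \<open>Vertex i is convex (interior angle 90 degrees) iff the boundary turns towards the
  interior there, i.e. the turn has the same sign as the orientation; otherwise
  (for a simple orthogonal polygon) it is concave (270 degrees).\<close>
definition convex_vertex :: "(int \<times> int) list \<Rightarrow> int \<Rightarrow> bool" where
  "convex_vertex P i \<longleftrightarrow> turn P i * signed_area2 P > 0"

definition concave_vertex :: "(int \<times> int) list \<Rightarrow> int \<Rightarrow> bool" where
  "concave_vertex P i \<longleftrightarrow> turn P i * signed_area2 P < 0"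

definition knobs :: "(int \<times> int) list \<Rightarrow> nat set" where
  "knobs P = {i. i < length P \<and> convex_vertex P (int i) \<and> convex_vertex P (int i + 1)}"

definition nonknob_convex :: "(int \<times> int) list \<Rightarrow> int \<Rightarrow> bool" where
  "nonknob_convex P i \<longleftrightarrow> convex_vertex P i \<and> concave_vertex P (i - 1) \<and> concave_vertex P (i + 1)"

end

theory Submission
  imports Defs "HOL-Complex_Analysis.Complex_Analysis"
begin

text \<open>Write \<open>\<tau> i = \<plusminus>1\<close> for the sign of the turn of the boundary at vertex \<open>i\<close>.
  Going once around a simple closed curve its tangent turns by \<open>\<plusminus>2\<pi>\<close> (Hopf's
  Umlaufsatz, proved here with Hopf's secant map), so the turns add up to \<open>4 \<tau> j\<^sub>0\<close>, where
  \<open>j\<^sub>0\<close> is the bottom left vertex. The polygon is oriented like the turn at \<open>j\<^sub>0\<close>: twice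
  the signed area is the sum of the winding numbers of the boundary around the unit cells,
  and these are all \<open>0\<close> or \<open>\<tau> j\<^sub>0\<close>. Hence the convex vertices are those with
  \<open>\<tau> i = \<tau> j\<^sub>0\<close>, and there are four more of them than concave ones: \<open>2 C = n + 4\<close>.
  Without non-knob convex vertices every convex vertex is an end of a knob, so
  \<open>C \<le> 2 k\<close> and \<open>n \<le> 4 k - 4\<close>.\<close>

lemma convex_bound_ge:
  fixes a x y u v :: real
  assumes "a \<le> x" "a \<le> y" "0 \<le> u" "0 \<le> v" "u + v = 1"
  shows "a \<le> u * x + v * y"
  using convex_bound_le[of "- x" "- a" "- y" u v] assms by simp

lemma sum_shift_mod:
  fixes f :: "int \<Rightarrow> 'a :: comm_monoid_add"
  assumes "\<And>a b. a mod int n = b mod int n \<Longrightarrow> f a = f b"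
  shows "(\<Sum>i<n. f (j + int i)) = (\<Sum>i<n. f (int i))"
proof -
  define r where "r i = nat ((j + int i) mod int n)" for i
  have "bij_betw r {..<n} {..<n}"
  proof (rule bij_betw_imageI)
    show "inj_on r {..<n}"
    proof (rule inj_onI)
      fix x y assume xy: "x \<in> {..<n}" "y \<in> {..<n}" "r x = r y"
      then have "(j + int x) mod int n = (j + int y) mod int n"
        by (simp add: r_def eq_nat_nat_iff)
      then have "int x mod int n = int y mod int n"
        using mod_add_cong[OF _ refl, of "j + int x" "int n" "j + int y" "- j"] by simp
      with xy show "x = y" by (simp add: zmod_int)
    qed
    then show "r ` {..<n} = {..<n}"
      by (intro endo_inj_surj) (auto simp: r_def nat_less_iff)
  qed
  then have "(\<Sum>i<n. f (int i)) = (\<Sum>i<n. f (int (r i)))"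
    by (rule sum.reindex_bij_betw[symmetric])
  also have "\<dots> = (\<Sum>i<n. f (j + int i))"
    by (intro sum.cong refl assms) (auto simp: r_def)
  finally show ?thesis by simp
qed

lemma half_integer_neq_integer: "(of_int a :: real) + 1 / 2 \<noteq> of_int m"
proof
  assume "(of_int a :: real) + 1 / 2 = of_int m"
  then have "2 * a + 1 = 2 * m" by linarith
  then show False by presburger
qed

section \<open>Winding numbers of elementary paths\<close>

lemma winding_number_exp_lift:
  assumes "continuous_on {0..1} q" "\<And>t. t \<in> {0..1} \<Longrightarrow> p t = exp (q t)"
  shows "winding_number p 0 = (q 1 - q 0) / (2 * of_real pi * \<i>)"
proof -
  have "winding_number p 0 = winding_number (exp \<circ> q) 0"
    by (rule winding_number_cong) (simp add: assms)
  also have "\<dots> = (pathfinish q - pathstart q) / (2 * of_real pi * \<i>)"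
    by (rule winding_number_compose_exp) (simp add: path_def assms)
  finally show ?thesis by (simp add: pathfinish_def pathstart_def)
qed

lemma Re_winding_number_off_branch_cut:
  assumes "continuous_on {0..1} u" "\<And>t. t \<in> {0..1} \<Longrightarrow> u t \<notin> \<real>\<^sub>\<le>\<^sub>0" "a \<noteq> 0"
    "\<And>t. t \<in> {0..1} \<Longrightarrow> p t = a * u t"
  shows "Re (winding_number p 0) = (Arg (u 1) - Arg (u 0)) / (2 * pi)"
proof -
  have nz: "u t \<noteq> 0" if "t \<in> {0..1}" for t
    using assms(2)[OF that] by auto
  have "winding_number p 0 = ((Ln a + Ln (u 1)) - (Ln a + Ln (u 0))) / (2 * of_real pi * \<i>)"
  proof (rule winding_number_exp_lift)
    show "continuous_on {0..1} (\<lambda>t. Ln a + Ln (u t))"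
      using assms(1,2) by (intro continuous_intros) auto
    show "p t = exp (Ln a + Ln (u t))" if "t \<in> {0..1}" for t
      using assms(3) assms(4)[OF that] nz[OF that] by (simp add: exp_add)
  qed
  moreover have "Re (z / (2 * of_real pi * \<i>)) = Im z / (2 * pi)" for z
    by (simp add: Re_divide field_simps power2_eq_square)
  ultimately have "Re (winding_number p 0) = (Im (Ln (u 1)) - Im (Ln (u 0))) / (2 * pi)"
    by simp
  with nz[of 0] nz[of 1] show ?thesis by (simp add: Arg_eq_Im_Ln)
qed

lemma Arg_imaginary: "r \<noteq> 0 \<Longrightarrow> Arg (Complex 0 r) = sgn r * pi / 2"
proof (cases "r > 0")
  case True
  have "Complex 0 r = of_real r * \<i>" by (simp add: complex_eq_iff)
  with True show ?thesis by simp
next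
  case False
  assume "r \<noteq> 0"
  with False have "- r > 0" by simp
  have "Complex 0 r = of_real (- r) * (- \<i>)" by (simp add: complex_eq_iff)
  also have "Arg \<dots> = Arg (- \<i>)" by (rule Arg_times_of_real[OF \<open>- r > 0\<close>])
  finally show ?thesis using False \<open>r \<noteq> 0\<close> by simp
qed

lemma not_nonpos_Reals_if_Re_pos: "Re z > 0 \<Longrightarrow> z \<notin> \<real>\<^sub>\<le>\<^sub>0"
  by (auto simp: nonpos_Reals_def)

lemma not_nonpos_Reals_if_Im_nonzero: "Im z \<noteq> 0 \<Longrightarrow> z \<notin> \<real>\<^sub>\<le>\<^sub>0"
  by (auto simp: nonpos_Reals_def)

lemma Re_winding_number_right_angle:
  assumes "a \<noteq> 0" "b \<noteq> 0" "Re (cnj a * b) = 0" "c \<noteq> 0"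
    "\<And>t. t \<in> {0..1} \<Longrightarrow> p t = c * linepath a b t"
  shows "Re (winding_number p 0) = sgn (Im (cnj a * b)) / 4"
proof -
  define w where "w = b / a"
  have w: "w = cnj a * b / of_real ((cmod a)\<^sup>2)"
    using assms(1) unfolding w_def by (simp add: complex_div_cnj[of b a] mult.commute)
  have Re_w: "Re w = 0" using assms(3) by (simp add: w Re_divide_of_real)
  have "w \<noteq> 0" using assms(1,2) by (simp add: w_def)
  with Re_w have Im_w: "Im w \<noteq> 0" by (simp add: complex_eq_iff)
  define u where "u t = (1 - of_real t) + of_real t * w" for t
  have "Re (winding_number p 0) = (Arg (u 1) - Arg (u 0)) / (2 * pi)"
  proof (rule Re_winding_number_off_branch_cut[where a = "c * a"])
    show "continuous_on {0..1} u" unfolding u_def by (intro continuous_intros)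
    fix t :: real assume t: "t \<in> {0..1}"
    show "u t \<notin> \<real>\<^sub>\<le>\<^sub>0"
    proof (cases "t = 1")
      case True then show ?thesis using Im_w by (simp add: u_def not_nonpos_Reals_if_Im_nonzero)
    next
      case False then show ?thesis using t Re_w by (intro not_nonpos_Reals_if_Re_pos) (simp add: u_def)
    qed
    show "p t = c * a * u t" using assms(1) assms(5)[OF t]
      by (simp add: u_def linepath_def w_def scaleR_conv_of_real algebra_simps)
  qed (use assms in auto)
  also have "u 1 = Complex 0 (Im w)" using Re_w by (simp add: u_def complex_eq_iff)
  also have "u 0 = 1" by (simp add: u_def)
  finally have "Re (winding_number p 0) = sgn (Im w) / 4"
    using Arg_imaginary[OF Im_w] by simp
  also have "sgn (Im w) = sgn (Im (cnj a * b))"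
    using assms(1) by (simp add: w Im_divide_of_real sgn_divide)
  finally show ?thesis .
qed

lemma winding_number_shift_periodic:
  assumes "path \<gamma>" "\<And>t m. \<gamma> (t + of_int m) = \<gamma> t" "z \<notin> path_image \<gamma>"
  shows "winding_number (\<lambda>t. \<gamma> (s + t)) z = winding_number \<gamma> z"
proof -
  have shift: "\<gamma> (s + t) = \<gamma> (frac s + t)" for t
    using assms(2)[of "frac s + t" "\<lfloor>s\<rfloor>"] by (simp add: frac_def)
  have "pathfinish \<gamma> = pathstart \<gamma>"
    using assms(2)[of 0 1] by (simp add: pathfinish_def pathstart_def)
  then have "winding_number (shiftpath (frac s) \<gamma>) z = winding_number \<gamma> z"
    using winding_number_shiftpath assms(1,3) by (simp add: frac_lt_1 less_imp_le)
  moreover have "winding_number (shiftpath (frac s) \<gamma>) z = winding_number (\<lambda>t. \<gamma> (s + t)) z"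
    by (rule winding_number_cong)
       (use assms(2)[of "frac s + _ - 1" 1] in \<open>auto simp: shiftpath_def shift\<close>)
  ultimately show ?thesis by simp
qed

lemma winding_number_triangle_detour:
  assumes "path \<rho>" "pathstart \<rho> = b" "pathfinish \<rho> = a" "z \<notin> path_image \<rho>"
    and "z \<notin> closed_segment a b" "z \<notin> closed_segment a c" "z \<notin> closed_segment c b"
  shows "winding_number (linepath a b +++ \<rho>) z =
    winding_number (linepath a b +++ linepath b c +++ linepath c a) z +
    winding_number (\<rho> +++ linepath a c +++ linepath c b) z"
proof -
  have "z \<notin> closed_segment b c" "z \<notin> closed_segment c a"
    using assms(6,7) by (auto simp: closed_segment_commute)
  moreover have "winding_number (linepath b c) z = - winding_number (linepath c b) z"
    "winding_number (linepath c a) z = - winding_number (linepath a c) z"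
    using winding_number_reversepath[of "linepath c b" z] winding_number_reversepath[of "linepath a c" z]
      assms(6,7) by simp_all
  ultimately show ?thesis
    using assms by (simp add: winding_number_join path_image_join)
qed

lemma closed_segment_meets_horizontal_line:
  assumes "w \<in> closed_segment p c" "Im w = Im c" "Im p \<noteq> Im c"
  shows "w = c"
proof -
  obtain u where "Re w = (1 - u) * Re p + u * Re c" "Im w = (1 - u) * Im p + u * Im c"
    using assms(1) by (auto simp: closed_segment_def scaleR_conv_of_real)
  moreover from this assms(2) have "(1 - u) * (Im p - Im c) = 0" by (simp add: algebra_simps)
  with assms(3) have "u = 1" by simp
  ultimately show ?thesis using assms(2) by (simp add: complex_eq_iff)
qed

lemma winding_number_triangle_beside_vertical:
  fixes p0 p1 c :: complex
  assumes vertical: "Re p0 = x" "Re p1 = x" and "Re c < x"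
    and crossing: "min (Im p0) (Im p1) < Im c" "Im c < max (Im p0) (Im p1)"
  shows "winding_number (linepath p0 p1 +++ linepath p1 c +++ linepath c p0) (midpoint (Complex x (Im c)) c)
    = of_real (sgn (Im p1 - Im p0))"
proof -
  define m where "m = Complex x (Im c)"
  define z where "z = midpoint m c"
  have z: "Re z < x" "Re z \<noteq> Re c" "Im z = Im c"
    using \<open>Re c < x\<close> by (simp_all add: z_def m_def midpoint_def)
  have "m \<in> closed_segment p0 p1"
    using vertical crossing by (auto simp: closed_segment_same_Re closed_segment_eq_real_ivl m_def)
  then have "closed_segment m c \<subseteq> convex hull {p0, p1, c}"
    by (intro closed_segment_subset)
       (auto simp: hull_inc segment_convex_hull intro: hull_mono[THEN subsetD, of "{p0, p1}"])
  then have "z \<in> convex hull {p0, p1, c}"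
    unfolding z_def using midpoint_in_closed_segment by blast
  moreover have "z \<notin> closed_segment p0 p1"
    using z vertical by (simp add: closed_segment_same_Re)
  moreover have "Im p0 \<noteq> Im c" "Im p1 \<noteq> Im c" using crossing by auto
  then have "z \<notin> closed_segment p1 c" "z \<notin> closed_segment c p0"
    using closed_segment_meets_horizontal_line[of z p1 c] closed_segment_meets_horizontal_line[of z p0 c] z
    by (auto simp: closed_segment_commute)
  ultimately have "z \<in> interior (convex hull {p0, p1, c})"
    unfolding interior_of_triangle[OF DIM_complex] by blast
  then have "winding_number (linepath p0 p1 +++ linepath p1 c +++ linepath c p0) z =
      (if 0 < Im ((p1 - p0) * cnj (p1 - z)) then 1 else -1)"
    by (rule winding_number_triangle)
  moreover have "Im ((p1 - p0) * cnj (p1 - z)) = (Im p1 - Im p0) * (x - Re z)"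
    using vertical by simp
  moreover have "Im p1 \<noteq> Im p0" using crossing by auto
  ultimately have "winding_number (linepath p0 p1 +++ linepath p1 c +++ linepath c p0) z
      = of_real (sgn (Im p1 - Im p0))"
    using z by (auto simp: sgn_if zero_less_mult_iff)
  then show ?thesis by (simp add: z_def m_def)
qed

lemma winding_number_triangle_beyond_vertical:
  assumes "Re a \<le> x" "Re b \<le> x" "Re c \<le> x" "x < Re z"
  shows "winding_number (linepath a b +++ linepath b c +++ linepath c a) z = 0"
proof (rule winding_number_zero_outside[OF _ convex_halfspace_Re_le])
  have "a \<in> {w. Re w \<le> x}" "b \<in> {w. Re w \<le> x}" "c \<in> {w. Re w \<le> x}"
    using assms by auto
  then show "path_image (linepath a b +++ linepath b c +++ linepath c a) \<subseteq> {w. Re w \<le> x}"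
    using closed_segment_subset[OF _ _ convex_halfspace_Re_le] by (simp add: path_image_join)
qed (use assms in auto)

lemma winding_number_jump_across_vertical_segment:
  fixes p0 p1 zL zR :: complex
  assumes \<rho>: "path \<rho>" "pathstart \<rho> = p1" "pathfinish \<rho> = p0"
    and vertical: "Re p0 = x" "Re p1 = x"
    and horizontal: "Im zL = h" "Im zR = h" "Re zL < x" "x < Re zR"
    and crossing: "min (Im p0) (Im p1) < h" "h < max (Im p0) (Im p1)"
    and avoids: "closed_segment zL zR \<inter> path_image \<rho> = {}"
  shows "winding_number (linepath p0 p1 +++ \<rho>) zL - winding_number (linepath p0 p1 +++ \<rho>) zR
    = of_real (sgn (Im p1 - Im p0))"
proof -
  define S where "S = closed_segment zL zR"
  define c where "c = Complex (2 * Re zL - x) h"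
  define T where "T = linepath p0 p1 +++ linepath p1 c +++ linepath c p0"
  define G where "G = \<rho> +++ linepath p0 c +++ linepath c p1"
  have in_S: "Im w = h \<and> Re zL \<le> Re w" if "w \<in> S" for w
    using that horizontal by (auto simp: S_def closed_segment_same_Im closed_segment_eq_real_ivl)
  have c: "Re c < Re zL" "Im c = h" "Im p0 \<noteq> h" "Im p1 \<noteq> h"
    using horizontal crossing by (auto simp: c_def)
  have not_sides: "w \<notin> closed_segment p0 c" "w \<notin> closed_segment c p1" if "w \<in> S" for w
  proof -
    from in_S[OF that] c have "w \<noteq> c" "Im w = Im c" by auto
    then show "w \<notin> closed_segment p0 c" "w \<notin> closed_segment c p1"
      using closed_segment_meets_horizontal_line[of w p0 c] closed_segment_meets_horizontal_line[of w p1 c] c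
      by (auto simp: closed_segment_commute)
  qed
  have not_p0p1: "z \<notin> closed_segment p0 p1" if "Re z \<noteq> x" for z
    using that vertical by (simp add: closed_segment_same_Re)
  have zS: "zL \<in> S" "zR \<in> S" by (auto simp: S_def)
  have detour: "winding_number (linepath p0 p1 +++ \<rho>) z = winding_number T z + winding_number G z"
    if "z \<in> S" "Re z \<noteq> x" for z
    unfolding T_def G_def using that avoids not_sides not_p0p1 \<rho>
    by (intro winding_number_triangle_detour) (auto simp: S_def)
  have "winding_number G zL = winding_number G zR"
  proof (rule winding_number_eq[OF _ _ zS])
    show "S \<inter> path_image G = {}"
      using avoids not_sides \<rho> by (auto simp: G_def S_def path_image_join)
  qed (use \<rho> in \<open>auto simp: G_def S_def\<close>)
  moreover have "winding_number T zR = 0"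
    unfolding T_def using vertical horizontal
    by (intro winding_number_triangle_beyond_vertical[where x = x]) (auto simp: c_def)
  moreover have "winding_number T zL = of_real (sgn (Im p1 - Im p0))"
  proof -
    have "winding_number T (midpoint (Complex x (Im c)) c) = of_real (sgn (Im p1 - Im p0))"
      unfolding T_def using vertical horizontal crossing c(2)
      by (intro winding_number_triangle_beside_vertical) (auto simp: c_def)
    moreover have "zL = midpoint (Complex x (Im c)) c"
      using horizontal by (simp add: c_def midpoint_def complex_eq_iff)
    ultimately show ?thesis by simp
  qed
  ultimately show ?thesis using detour[OF zS(1)] detour[OF zS(2)] horizontal by simp
qed

section \<open>Orthogonal polygons and their boundary loop\<close>

text \<open>Vertices are indexed by integers modulo \<open>n\<close>, and the plane is \<^typ>\<open>complex\<close>.\<close>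

locale orth_polygon =
  fixes P :: "(int \<times> int) list" and n :: nat
  assumes simple: "simple_orth_polygon P" and length_P: "length P = n"
begin

definition X :: "int \<Rightarrow> int" where "X i = fst (vtx P i)"
definition Y :: "int \<Rightarrow> int" where "Y i = snd (vtx P i)"
definition vertex :: "int \<Rightarrow> complex" where "vertex i = Complex (of_int (X i)) (of_int (Y i))"
definition edge :: "int \<Rightarrow> complex" where "edge i = vertex (i + 1) - vertex i"
definition horiz :: "int \<Rightarrow> bool" where "horiz i \<longleftrightarrow> Y (i + 1) = Y i \<and> X (i + 1) \<noteq> X i"
definition vert :: "int \<Rightarrow> bool" where "vert i \<longleftrightarrow> X (i + 1) = X i \<and> Y (i + 1) \<noteq> Y i"
definition list_index :: "int \<Rightarrow> nat" where "list_index i = nat (i mod int n)"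

lemma Re_vertex [simp]: "Re (vertex i) = of_int (X i)"
  and Im_vertex [simp]: "Im (vertex i) = of_int (Y i)"
  by (simp_all add: vertex_def)

lemma vtx_eq: "vtx P i = (X i, Y i)"
  by (simp add: X_def Y_def)

lemma n_ge_4: "n \<ge> 4"
  using simple length_P unfolding simple_orth_polygon_def Let_def by blast

lemma n_pos: "n > 0"
  using n_ge_4 by simp

lemma list_index_less: "list_index i < n"
  and int_list_index: "int (list_index i) = i mod int n"
  using n_pos by (auto simp: list_index_def nat_less_iff)

lemma vtx_mod_cong: "i mod int n = j mod int n \<Longrightarrow> vtx P i = vtx P j"
  by (simp add: vtx_def length_P)

lemma X_mod_cong: "i mod int n = j mod int n \<Longrightarrow> X i = X j"
  and Y_mod_cong: "i mod int n = j mod int n \<Longrightarrow> Y i = Y j"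
  using vtx_mod_cong[of i j] by (simp_all add: X_def Y_def)

lemma vertex_mod_cong: "i mod int n = j mod int n \<Longrightarrow> vertex i = vertex j"
  using X_mod_cong[of i j] Y_mod_cong[of i j] by (simp add: vertex_def)

lemma edge_mod_cong: "i mod int n = j mod int n \<Longrightarrow> edge i = edge j"
  unfolding edge_def using vertex_mod_cong mod_add_cong[OF _ refl, of i "int n" j 1] by metis

lemma vtx_list_index: "vtx P (int (list_index i)) = vtx P i"
  and vtx_list_index_plus1: "vtx P (int (list_index i) + 1) = vtx P (i + 1)"
  by (intro vtx_mod_cong; simp add: int_list_index mod_add_left_eq)+

lemma horiz_edge_list_index: "horiz_edge P (list_index i) \<longleftrightarrow> horiz i"
  and vert_edge_list_index: "vert_edge P (list_index i) \<longleftrightarrow> vert i"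
  unfolding horiz_edge_def vert_edge_def vtx_list_index vtx_list_index_plus1
  by (auto simp: horiz_def vert_def vtx_eq)

lemma list_index_plus1: "(list_index i + 1) mod n = list_index (i + 1)"
proof -
  have "int ((list_index i + 1) mod n) = (i mod int n + 1) mod int n"
    by (simp add: zmod_int int_list_index add.commute)
  also have "\<dots> = int (list_index (i + 1))"
    by (simp add: int_list_index mod_add_left_eq)
  finally show ?thesis by simp
qed

lemma horiz_vert_alternate: "(horiz i \<and> vert (i + 1)) \<or> (vert i \<and> horiz (i + 1))"
proof -
  have "\<forall>k<n. (horiz_edge P k \<and> vert_edge P ((k + 1) mod n)) \<or>
      (vert_edge P k \<and> horiz_edge P ((k + 1) mod n))"
    using simple unfolding simple_orth_polygon_def Let_def length_P by blast
  from this[rule_format, OF list_index_less[of i]] show ?thesis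
    unfolding list_index_plus1 horiz_edge_list_index vert_edge_list_index .
qed

lemma horiz_or_vert: "horiz i \<or> vert i"
  using horiz_vert_alternate[of i] by auto

lemma edge_nonzero: "edge i \<noteq> 0"
  using horiz_or_vert[of i] by (auto simp: edge_def horiz_def vert_def complex_eq_iff)

lemma edge_seg_list_index:
  "edge_seg P (list_index k) = closed_segment (to_real (vtx P k)) (to_real (vtx P (k + 1)))"
  by (simp add: edge_seg_def vtx_list_index vtx_list_index_plus1)

lemma consecutive_edge_segs:
  "edge_seg P (list_index k) \<inter> edge_seg P (list_index (k + 1)) = {to_real (vtx P (k + 1))}"
proof -
  have "\<forall>i<n. edge_seg P i \<inter> edge_seg P ((i + 1) mod n) = {to_real (vtx P (int i + 1))}"
    using simple unfolding simple_orth_polygon_def Let_def length_P by blast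
  from this[rule_format, OF list_index_less[of k]] show ?thesis
    unfolding list_index_plus1 vtx_list_index_plus1 .
qed

lemma nonadjacent_edge_segs:
  "i < n \<Longrightarrow> j < n \<Longrightarrow> i \<noteq> j \<Longrightarrow> j \<noteq> (i + 1) mod n \<Longrightarrow> i \<noteq> (j + 1) mod n \<Longrightarrow>
    edge_seg P i \<inter> edge_seg P j = {}"
  using simple unfolding simple_orth_polygon_def Let_def length_P by blast

lemma point_on_edge_in_edge_seg:
  assumes "0 \<le> l" "l \<le> 1"
  shows "(Re (vertex k + of_real l * edge k), Im (vertex k + of_real l * edge k))
    \<in> edge_seg P (list_index k)"
  unfolding edge_seg_list_index closed_segment_def
  using assms by (auto intro!: exI[of _ l] simp: to_real_def vtx_eq edge_def algebra_simps)

lemma point_on_edge_eq_next_vertex: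
  "vertex k + of_real l * edge k = vertex (k + 1) \<longleftrightarrow> l = 1"
proof -
  have "vertex k + of_real l * edge k - vertex (k + 1) = of_real (l - 1) * edge k"
    by (simp add: edge_def algebra_simps)
  then show ?thesis using edge_nonzero[of k] by auto
qed

lemma point_on_edge_unique:
  assumes l: "0 \<le> l" "l < 1" and m: "0 \<le> m" "m < 1"
    and eq: "vertex k + of_real l * edge k = vertex k' + of_real m * edge k'"
  shows "k mod int n = k' mod int n \<and> l = m"
proof -
  define i where "i = list_index k"
  define j where "j = list_index k'"
  define z where "z = vertex k + of_real l * edge k"
  have zi: "(Re z, Im z) \<in> edge_seg P i"
    unfolding z_def i_def using point_on_edge_in_edge_seg l by auto
  have zj: "(Re z, Im z) \<in> edge_seg P j"
    unfolding z_def j_def eq using point_on_edge_in_edge_seg m by auto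
  have vertex_if: "z = vertex k''" if "(Re z, Im z) = to_real (vtx P k'')" for k''
    using that by (simp add: to_real_def vtx_eq complex_eq_iff)
  consider "i = j" | "j = (i + 1) mod n" | "i = (j + 1) mod n"
    | "i \<noteq> j" "j \<noteq> (i + 1) mod n" "i \<noteq> (j + 1) mod n"
    by blast
  then show ?thesis
  proof cases
    case 1
    then have km: "k mod int n = k' mod int n"
      by (metis i_def j_def int_list_index)
    then have "vertex k = vertex k'" "edge k = edge k'"
      by (auto intro: vertex_mod_cong edge_mod_cong)
    with eq km edge_nonzero[of k] show ?thesis by simp
  next
    case 2
    then have "j = list_index (k + 1)" unfolding i_def list_index_plus1 .
    then have "z = vertex (k + 1)"
      using consecutive_edge_segs[of k] zi zj vertex_if by (auto simp: i_def)
    with l show ?thesis by (simp add: z_def point_on_edge_eq_next_vertex)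
  next
    case 3
    then have "i = list_index (k' + 1)" unfolding j_def list_index_plus1 .
    then have "z = vertex (k' + 1)"
      using consecutive_edge_segs[of k'] zi zj vertex_if by (auto simp: j_def)
    with m eq show ?thesis by (simp add: z_def point_on_edge_eq_next_vertex)
  next
    case 4
    then show ?thesis
      using nonadjacent_edge_segs[OF _ _ 4] zi zj list_index_less by (auto simp: i_def j_def)
  qed
qed

definition polyline :: "real \<Rightarrow> complex" where
  "polyline u = vertex \<lfloor>u\<rfloor> + of_real (frac u) * edge \<lfloor>u\<rfloor>"

definition boundary :: "real \<Rightarrow> complex" where
  "boundary t = polyline (real n * t)"

lemma polyline_on_edge:
  assumes "0 \<le> l" "l \<le> 1"
  shows "polyline (of_int k + l) = vertex k + of_real l * edge k"
proof (cases "l = 1")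
  case True
  then have "\<lfloor>of_int k + l\<rfloor> = k + 1" by simp
  with True show ?thesis by (simp add: polyline_def frac_def edge_def)
next
  case False
  with assms have "\<lfloor>of_int k + l\<rfloor> = k" by linarith
  then show ?thesis by (simp add: polyline_def frac_def)
qed

lemma polyline_periodic: "polyline (u + of_int (int n * m)) = polyline u"
proof -
  have floor: "\<lfloor>u + of_int (int n * m)\<rfloor> = \<lfloor>u\<rfloor> + int n * m" by (simp only: floor_add_int)
  have "(\<lfloor>u\<rfloor> + int n * m) mod int n = \<lfloor>u\<rfloor> mod int n" by simp
  then show ?thesis
    unfolding polyline_def frac_def floor
    using vertex_mod_cong[of "\<lfloor>u\<rfloor> + int n * m" "\<lfloor>u\<rfloor>"]
      edge_mod_cong[of "\<lfloor>u\<rfloor> + int n * m" "\<lfloor>u\<rfloor>"]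
    by simp
qed

lemma continuous_on_polyline: "continuous_on UNIV polyline"
proof (rule continuous_at_imp_continuous_on, rule ballI)
  fix u :: real
  have on_edge: "continuous_on {of_int k .. of_int k + 1} polyline" for k
  proof (rule continuous_on_eq)
    show "continuous_on {of_int k .. of_int k + 1} (\<lambda>u. vertex k + of_real (u - of_int k) * edge k)"
      by (intro continuous_intros)
    show "vertex k + of_real (u - of_int k) * edge k = polyline u"
      if "u \<in> {of_int k .. of_int k + 1}" for u
      using polyline_on_edge[of "u - of_int k" k] that by simp
  qed
  define k where "k = \<lfloor>u\<rfloor>"
  have "continuous_on ({of_int (k - 1) .. of_int (k - 1) + 1} \<union> {of_int k .. of_int k + 1}) polyline"
    by (intro continuous_on_closed_Un on_edge) auto
  moreover have "{of_int (k - 1) .. of_int (k - 1) + 1} \<union> {of_int k .. of_int k + 1} =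
      {of_int k - 1 .. of_int k + (1::real)}"
    by auto
  ultimately have "continuous_on {of_int k - 1 .. of_int k + (1::real)} polyline"
    by simp
  then have "continuous_on {of_int k - 1 <..< of_int k + (1::real)} polyline"
    by (rule continuous_on_subset) auto
  moreover have "u \<in> {of_int k - 1 <..< of_int k + (1::real)}"
    unfolding k_def by auto linarith
  ultimately show "isCont polyline u"
    using continuous_on_eq_continuous_at open_greaterThanLessThan by blast
qed

lemma continuous_on_boundary: "continuous_on UNIV boundary"
  unfolding boundary_def
  by (intro continuous_on_compose2[OF continuous_on_polyline]) (auto intro!: continuous_intros)

lemma boundary_on_edge:
  "0 \<le> l \<Longrightarrow> l \<le> 1 \<Longrightarrow> boundary ((of_int k + l) / real n) = vertex k + of_real l * edge k"
  using polyline_on_edge n_pos by (simp add: boundary_def)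

lemma boundary_vertex: "boundary (of_int k / real n) = vertex k"
  using boundary_on_edge[of 0 k] by simp

lemma boundary_periodic: "boundary (t + of_int m) = boundary t"
proof -
  have "real n * (t + of_int m) = real n * t + of_int (int n * m)" by (simp add: algebra_simps)
  then show ?thesis unfolding boundary_def using polyline_periodic by simp
qed

lemma boundary_periodic1: "boundary (t + 1) = boundary t"
  using boundary_periodic[of t 1] by simp

lemma boundary_cases:
  obtains k l where "0 \<le> l" "l < 1" "real n * t = of_int k + l"
    "boundary t = vertex k + of_real l * edge k"
proof (rule that)
  show "0 \<le> frac (real n * t)" "frac (real n * t) < 1" by (simp_all add: frac_lt_1)
  show "real n * t = of_int \<lfloor>real n * t\<rfloor> + frac (real n * t)" by (simp add: frac_def)
  show "boundary t = vertex \<lfloor>real n * t\<rfloor> + of_real (frac (real n * t)) * edge \<lfloor>real n * t\<rfloor>"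
    by (simp add: boundary_def polyline_def)
qed

lemma boundary_eq_imp_int_diff:
  assumes "boundary s = boundary t"
  obtains m :: int where "t - s = of_int m"
proof -
  obtain k l where kl: "0 \<le> l" "l < 1" "real n * s = of_int k + l"
    "boundary s = vertex k + of_real l * edge k"
    by (rule boundary_cases)
  obtain k' l' where kl': "0 \<le> l'" "l' < 1" "real n * t = of_int k' + l'"
    "boundary t = vertex k' + of_real l' * edge k'"
    by (rule boundary_cases)
  have "vertex k + of_real l * edge k = vertex k' + of_real l' * edge k'"
    using kl(4) kl'(4) assms by simp
  then have "k mod int n = k' mod int n \<and> l = l'"
    by (rule point_on_edge_unique[OF kl(1,2) kl'(1,2)])
  then obtain q where q: "k' = k + int n * q" "l = l'"
    by (metis mod_eqE mult.commute add.commute diff_add_cancel)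
  then have "real n * (t - s) = real n * of_int q" using kl(3) kl'(3)
    by (simp add: algebra_simps)
  then show ?thesis using n_pos that[of q] by simp
qed

lemma boundary_neq:
  assumes "0 < t - s" "t - s < 1"
  shows "boundary t \<noteq> boundary s"
proof
  assume "boundary t = boundary s"
  then obtain m :: int where "s - t = of_int m" by (rule boundary_eq_imp_int_diff)
  with assms have "(of_int m :: real) < 0" "-1 < (of_int m :: real)" by linarith+
  then show False by simp
qed

lemma path_boundary: "path boundary"
  unfolding path_def by (rule continuous_on_subset[OF continuous_on_boundary]) simp

lemma boundary_loop: "pathfinish boundary = pathstart boundary"
  using boundary_periodic1[of 0] by (simp add: pathfinish_def pathstart_def)

lemma simple_path_boundary: "simple_path boundary"
  unfolding simple_path_def loop_free_def
proof (intro conjI path_boundary ballI impI)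
  fix s t :: real assume st: "s \<in> {0..1}" "t \<in> {0..1}" "boundary s = boundary t"
  then obtain m :: int where m: "t - s = of_int m" by (auto elim: boundary_eq_imp_int_diff)
  with st have "-1 \<le> m" "m \<le> 1" by auto
  then have "m = -1 \<or> m = 0 \<or> m = 1" by auto
  with m st show "s = t \<or> s = 0 \<and> t = 1 \<or> s = 1 \<and> t = 0" by auto
qed

lemma boundary_on_grid_line:
  "(\<exists>m::int. Im (boundary t) = of_int m) \<or> (\<exists>m::int. Re (boundary t) = of_int m)"
proof -
  obtain k l where kl: "boundary t = vertex k + of_real l * edge k" by (rule boundary_cases)
  show ?thesis using horiz_or_vert[of k]
  proof
    assume "horiz k"
    then have "Im (boundary t) = of_int (Y k)" unfolding kl by (simp add: edge_def horiz_def)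
    then show ?thesis by blast
  next
    assume "vert k"
    then have "Re (boundary t) = of_int (X k)" unfolding kl by (simp add: edge_def vert_def)
    then show ?thesis by blast
  qed
qed

lemma Re_point_on_edge: "Re (vertex k + of_real l * edge k) = (1 - l) * X k + l * X (k + 1)"
  and Im_point_on_edge: "Im (vertex k + of_real l * edge k) = (1 - l) * Y k + l * Y (k + 1)"
  by (simp_all add: edge_def algebra_simps)

section \<open>The turning number\<close>

definition turn_sgn :: "int \<Rightarrow> int" where "turn_sgn i = sgn (turn P i)"

lemma turn_eq:
  "turn P i = (X i - X (i - 1)) * (Y (i + 1) - Y i) - (Y i - Y (i - 1)) * (X (i + 1) - X i)"
  by (simp add: turn_def Let_def X_def Y_def)

lemma Im_cnj_edge_mult_edge: "Im (cnj (edge (i - 1)) * edge i) = of_int (turn P i)"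
  by (simp add: turn_eq edge_def algebra_simps)

lemma Re_cnj_edge_mult_edge: "Re (cnj (edge (i - 1)) * edge i) = 0"
  using horiz_vert_alternate[of "i - 1"] by (auto simp: edge_def horiz_def vert_def)

lemma turn_nonzero: "turn P i \<noteq> 0"
  using horiz_vert_alternate[of "i - 1"] by (auto simp: turn_eq horiz_def vert_def)

lemma turn_sgn_cases: "turn_sgn i = 1 \<or> turn_sgn i = -1"
  using turn_nonzero[of i] by (auto simp: turn_sgn_def sgn_if)

lemma turn_sgn_mod_cong:
  assumes "i mod int n = j mod int n"
  shows "turn_sgn i = turn_sgn j"
proof -
  have "(i + c) mod int n = (j + c) mod int n" for c
    using mod_add_cong[OF assms refl] .
  from this[of 1] this[of "-1"] show ?thesis
    unfolding turn_sgn_def turn_eq using X_mod_cong Y_mod_cong assms by (metis diff_conv_add_uminus)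
qed

lemma Re_winding_number_turn:
  assumes "c \<noteq> 0" "\<And>t. t \<in> {0..1} \<Longrightarrow> p t = c * linepath (edge (i - 1)) (edge i) t"
  shows "Re (winding_number p 0) = of_int (turn_sgn i) / 4"
proof -
  have "sgn (real_of_int (turn P i)) = of_int (turn_sgn i)"
    by (simp add: turn_sgn_def sgn_if)
  then show ?thesis
    using Re_winding_number_right_angle[OF edge_nonzero edge_nonzero Re_cnj_edge_mult_edge assms]
    by (simp only: Im_cnj_edge_mult_edge)
qed

definition bottom_left :: "int \<Rightarrow> bool" where
  "bottom_left j \<longleftrightarrow> (\<forall>k. Y j \<le> Y k \<and> (Y k = Y j \<longrightarrow> X j \<le> X k))"

lemma bottom_left_exists: "\<exists>j. bottom_left j"
proof -
  define A where "A = {0..<int n}"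
  have A: "finite A" "A \<noteq> {}" using n_pos by (auto simp: A_def)
  define S where "S = {k \<in> A. Y k = Min (Y ` A)}"
  have "Min (Y ` A) \<in> Y ` A" using A by simp
  then have S: "finite S" "S \<noteq> {}"
    using A by (force simp: S_def)+
  have "Min (X ` S) \<in> X ` S" using S by simp
  then obtain j where j: "j \<in> S" "X j = Min (X ` S)" by force
  have "bottom_left j" unfolding bottom_left_def
  proof
    fix k
    have k: "k mod int n \<in> A" "X k = X (k mod int n)" "Y k = Y (k mod int n)"
      using n_pos by (auto simp: A_def intro!: X_mod_cong Y_mod_cong)
    then show "Y j \<le> Y k \<and> (Y k = Y j \<longrightarrow> X j \<le> X k)"
      using j A S by (auto simp: S_def)
  qed
  then show ?thesis by blast
qed

end

locale orth_polygon_bottom_left = orth_polygon +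
  fixes j0 :: int
  assumes bottom_left: "bottom_left j0"
begin

lemma boundary_above_bottom_left:
  "of_int (Y j0) \<le> Im (boundary t) \<and>
    (Im (boundary t) = of_int (Y j0) \<longrightarrow> of_int (X j0) \<le> Re (boundary t))"
proof -
  obtain k l where kl: "0 \<le> l" "l < 1" "boundary t = vertex k + of_real l * edge k"
    by (rule boundary_cases)
  define y0 where "y0 = real_of_int (Y j0)"
  define x0 where "x0 = real_of_int (X j0)"
  have y: "y0 \<le> Y k" "y0 \<le> Y (k + 1)"
    "Y k = y0 \<Longrightarrow> x0 \<le> X k" "Y (k + 1) = y0 \<Longrightarrow> x0 \<le> X (k + 1)"
    using bottom_left unfolding bottom_left_def y0_def x0_def by auto
  have Im: "Im (boundary t) - y0 = (1 - l) * (Y k - y0) + l * (Y (k + 1) - y0)"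
    and Re: "Re (boundary t) - x0 = (1 - l) * (X k - x0) + l * (X (k + 1) - x0)"
    unfolding kl(3) Re_point_on_edge Im_point_on_edge by (simp_all add: algebra_simps)
  have Im_parts: "(1 - l) * (Y k - y0) \<ge> 0" "l * (Y (k + 1) - y0) \<ge> 0"
    using kl y by auto
  moreover have "x0 \<le> Re (boundary t)" if "Im (boundary t) = y0"
  proof -
    have "(1 - l) * (Y k - y0) = 0" "l * (Y (k + 1) - y0) = 0"
      using Im Im_parts that by linarith+
    with kl y have "(1 - l) * (X k - x0) \<ge> 0" "l * (X (k + 1) - x0) \<ge> 0"
      by auto
    with Re show ?thesis by linarith
  qed
  ultimately show ?thesis using Im unfolding y0_def x0_def by linarith
qed

lemma boundary_minus_bottom_left_off_branch_cut:
  assumes "boundary t \<noteq> vertex j0"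
  shows "boundary t - vertex j0 \<notin> \<real>\<^sub>\<le>\<^sub>0"
proof -
  have "Im (boundary t - vertex j0) > 0 \<or> (Im (boundary t - vertex j0) = 0 \<and> Re (boundary t - vertex j0) > 0)"
    using boundary_above_bottom_left[of t] assms by (auto simp: complex_eq_iff)
  then show ?thesis
    using not_nonpos_Reals_if_Re_pos not_nonpos_Reals_if_Im_nonzero by auto
qed

lemma bottom_left_corner:
  "(horiz j0 \<and> vert (j0 - 1) \<and> X j0 < X (j0 + 1) \<and> Y j0 < Y (j0 - 1) \<and> turn_sgn j0 = 1) \<or>
   (vert j0 \<and> horiz (j0 - 1) \<and> Y j0 < Y (j0 + 1) \<and> X j0 < X (j0 - 1) \<and> turn_sgn j0 = -1)"
proof -
  have below: "Y j0 \<le> Y (j0 + 1)" "Y j0 \<le> Y (j0 - 1)"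
    "Y (j0 + 1) = Y j0 \<Longrightarrow> X j0 \<le> X (j0 + 1)" "Y (j0 - 1) = Y j0 \<Longrightarrow> X j0 \<le> X (j0 - 1)"
    using bottom_left by (auto simp: bottom_left_def)
  from horiz_vert_alternate[of "j0 - 1"] show ?thesis
  proof (elim disjE conjE)
    assume "horiz (j0 - 1)" "vert (j0 - 1 + 1)"
    then have "Y j0 = Y (j0 - 1)" "X j0 \<noteq> X (j0 - 1)" "X (j0 + 1) = X j0" "Y (j0 + 1) \<noteq> Y j0"
      by (auto simp: horiz_def vert_def)
    with below have "vert j0" "horiz (j0 - 1)" "Y j0 < Y (j0 + 1)" "X j0 < X (j0 - 1)"
      by (auto simp: horiz_def vert_def)
    moreover from this have "turn P j0 < 0"
      unfolding turn_eq horiz_def vert_def by (simp add: mult_neg_pos)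
    ultimately show ?thesis by (simp add: turn_sgn_def)
  next
    assume "vert (j0 - 1)" "horiz (j0 - 1 + 1)"
    then have "X j0 = X (j0 - 1)" "Y j0 \<noteq> Y (j0 - 1)" "Y (j0 + 1) = Y j0" "X (j0 + 1) \<noteq> X j0"
      by (auto simp: horiz_def vert_def)
    with below have "horiz j0" "vert (j0 - 1)" "X j0 < X (j0 + 1)" "Y j0 < Y (j0 - 1)"
      by (auto simp: horiz_def vert_def)
    moreover from this have "turn P j0 > 0"
      unfolding turn_eq horiz_def vert_def by (simp add: mult_neg_pos)
    ultimately show ?thesis by (simp add: turn_sgn_def)
  qed
qed

definition t0 :: real where "t0 = of_int j0 / real n"
definition dt :: real where "dt = 1 / real n"

lemma dt_pos: "0 < dt" and dt_le: "dt \<le> 1 / 4"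
  using n_ge_4 by (auto simp: dt_def divide_simps)

lemma boundary_t0: "boundary t0 = vertex j0"
  using boundary_vertex by (simp add: t0_def)

lemma boundary_t0_plus_dt: "boundary (t0 + dt) = vertex (j0 + 1)"
  using boundary_vertex[of "j0 + 1"] by (simp add: t0_def dt_def add_divide_distrib)

lemma boundary_t0_minus_dt: "boundary (t0 + 1 - dt) = vertex (j0 - 1)"
proof -
  have "boundary (t0 + 1 - dt) = boundary (t0 - dt)"
    using boundary_periodic1[of "t0 - dt"] by (simp add: algebra_simps)
  also have "t0 - dt = of_int (j0 - 1) / real n" by (simp add: t0_def dt_def diff_divide_distrib)
  finally show ?thesis using boundary_vertex[of "j0 - 1"] by simp
qed

text \<open>Hopf's argument: the secant map has no zero on \<open>secant_domain\<close>, so along the boundary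
  of this quadrilateral its winding number vanishes. Along the four sides it sweeps the
  secants from the bottom left vertex (a quarter turn, as seen from that vertex the boundary
  avoids the leftward ray), the turn at that vertex, the secants to it (again a quarter
  turn), and the secants across single edges, which collect all the other turns.\<close>

definition secant :: "real \<times> real \<Rightarrow> complex" where
  "secant p = boundary (snd p) - boundary (fst p)"

definition secant_domain :: "(real \<times> real) set" where
  "secant_domain = {p. t0 \<le> fst p \<and> snd p \<le> t0 + 1 \<and> dt \<le> snd p - fst p \<and> snd p - fst p \<le> 1 - dt}"

definition fan :: "real \<Rightarrow> complex" where
  "fan l = boundary (t0 + dt + l * (1 - 2 * dt)) - boundary t0"

definition edge_path :: "real \<Rightarrow> complex" where
  "edge_path l = boundary (t0 + l * (1 - dt) + dt) - boundary (t0 + l * (1 - dt))"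

lemma convex_secant_domain: "convex secant_domain"
  unfolding convex_def secant_domain_def
proof (intro ballI allI impI, clarsimp)
  fix s1 t1 s2 t2 u v :: real
  assume a: "t0 \<le> s1" "t1 \<le> t0 + 1" "dt \<le> t1 - s1" "t1 - s1 \<le> 1 - dt"
     "t0 \<le> s2" "t2 \<le> t0 + 1" "dt \<le> t2 - s2" "t2 - s2 \<le> 1 - dt" "0 \<le> u" "0 \<le> v" "u + v = 1"
  have "u * t1 + v * t2 - (u * s1 + v * s2) = u * (t1 - s1) + v * (t2 - s2)"
    by (simp add: algebra_simps)
  with a show "t0 \<le> u * s1 + v * s2 \<and> u * t1 + v * t2 \<le> t0 + 1 \<and>
      dt \<le> u * t1 + v * t2 - (u * s1 + v * s2) \<and> u * t1 + v * t2 - (u * s1 + v * s2) \<le> 1 - dt"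
    by (simp add: convex_bound_ge convex_bound_le)
qed

lemma secant_nonzero: "p \<in> secant_domain \<Longrightarrow> secant p \<noteq> 0"
  using boundary_neq dt_pos dt_le by (fastforce simp: secant_def secant_domain_def)

lemma continuous_on_secant: "continuous_on S secant"
  unfolding secant_def
  by (intro continuous_intros continuous_on_compose2[OF continuous_on_boundary]) auto

text \<open>A closed polygon in the convex domain of the secant map is contractible there.\<close>

lemma winding_number_secant_quadrilateral:
  assumes corners: "A \<in> secant_domain" "B \<in> secant_domain" "C \<in> secant_domain" "D \<in> secant_domain"
  shows "winding_number (secant \<circ> linepath A B) 0 + winding_number (secant \<circ> linepath B C) 0 +
    winding_number (secant \<circ> linepath C D) 0 + winding_number (secant \<circ> linepath D A) 0 = 0"
proof -
  define loop where "loop = linepath A B +++ linepath B C +++ linepath C D +++ linepath D A"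
  have segments: "closed_segment p q \<subseteq> secant_domain" if "p \<in> secant_domain" "q \<in> secant_domain" for p q
    using closed_segment_subset convex_secant_domain that by blast
  have off_zero: "0 \<notin> path_image (secant \<circ> linepath p q)"
    if "p \<in> secant_domain" "q \<in> secant_domain" for p q
    using segments[OF that] secant_nonzero by (auto simp: path_image_compose)
  have path_secant: "path (secant \<circ> linepath p q)" for p q
    by (intro path_continuous_image path_linepath continuous_on_secant)
  have "homotopic_loops secant_domain loop (linepath A A)"
  proof (rule homotopic_loops_linear)
    show "closed_segment (loop t) (linepath A A t) \<subseteq> secant_domain" if "t \<in> {0..1}" for t
    proof -
      have "path_image loop \<subseteq> secant_domain"
        unfolding loop_def using segments corners by (simp add: path_image_join)
      with that have "loop t \<in> secant_domain" by (auto simp: path_image_def)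
      with corners show ?thesis using segments by simp
    qed
  qed (auto simp: loop_def)
  then have "homotopic_loops (- {0}) (secant \<circ> loop) (secant \<circ> linepath A A)"
    by (rule homotopic_loops_continuous_image) (use continuous_on_secant secant_nonzero in auto)
  then have "winding_number (secant \<circ> loop) 0 = winding_number (secant \<circ> linepath A A) 0"
    by (rule winding_number_homotopic_loops)
  also have "\<dots> = 0"
    by (rule winding_number_constI[of "secant A"]) (use secant_nonzero corners in auto)
  finally show ?thesis
    unfolding loop_def path_compose_join using corners
    by (simp add: winding_number_join path_secant off_zero not_in_path_image_join path_image_join
        pathstart_compose pathfinish_compose add.assoc)
qed

lemma continuous_on_fan: "continuous_on {0..1} fan"
  unfolding fan_def by (intro continuous_intros continuous_on_compose2[OF continuous_on_boundary]) auto

lemma fan_off_branch_cut: "l \<in> {0..1} \<Longrightarrow> fan l \<notin> \<real>\<^sub>\<le>\<^sub>0"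
proof -
  assume l: "l \<in> {0..1}"
  then have "0 \<le> l * (1 - 2 * dt)" "l * (1 - 2 * dt) \<le> 1 - 2 * dt"
    using dt_le by (auto simp: mult_le_cancel_right1)
  then have "boundary (t0 + dt + l * (1 - 2 * dt)) \<noteq> boundary t0"
    using dt_pos by (intro boundary_neq) auto
  then show ?thesis
    unfolding fan_def boundary_t0 by (intro boundary_minus_bottom_left_off_branch_cut) (simp add: boundary_t0)
qed

lemma Arg_fan: "(Arg (fan 1) - Arg (fan 0)) / (2 * pi) = of_int (turn_sgn j0) / 4"
proof -
  have fan0: "fan 0 = vertex (j0 + 1) - vertex j0"
    by (simp add: fan_def boundary_t0 boundary_t0_plus_dt)
  have fan1: "fan 1 = vertex (j0 - 1) - vertex j0"
    using boundary_t0_minus_dt by (simp add: fan_def boundary_t0 algebra_simps)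
  have Arg_real: "Arg (of_real r) = 0" if "r > 0" for r
    using that by simp
  from bottom_left_corner show ?thesis
  proof (elim disjE conjE)
    assume "horiz j0" "vert (j0 - 1)" "X j0 < X (j0 + 1)" "Y j0 < Y (j0 - 1)" "turn_sgn j0 = 1"
    moreover from this have "fan 0 = of_real (of_int (X (j0 + 1) - X j0))"
      "fan 1 = Complex 0 (of_int (Y (j0 - 1) - Y j0))"
      by (simp_all add: fan0 fan1 complex_eq_iff horiz_def vert_def)
    ultimately have "Arg (fan 0) = 0" "Arg (fan 1) = pi / 2"
      using Arg_imaginary[of "of_int (Y (j0 - 1) - Y j0)"] Arg_real[of "of_int (X (j0 + 1) - X j0)"]
      by simp_all
    with \<open>turn_sgn j0 = 1\<close> show ?thesis by simp
  next
    assume "vert j0" "horiz (j0 - 1)" "Y j0 < Y (j0 + 1)" "X j0 < X (j0 - 1)" "turn_sgn j0 = -1"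
    moreover from this have "fan 1 = of_real (of_int (X (j0 - 1) - X j0))"
      "fan 0 = Complex 0 (of_int (Y (j0 + 1) - Y j0))"
      by (simp_all add: fan0 fan1 complex_eq_iff horiz_def vert_def)
    ultimately have "Arg (fan 1) = 0" "Arg (fan 0) = pi / 2"
      using Arg_imaginary[of "of_int (Y (j0 + 1) - Y j0)"] Arg_real[of "of_int (X (j0 - 1) - X j0)"]
      by simp_all
    with \<open>turn_sgn j0 = -1\<close> show ?thesis by simp
  qed
qed

lemma Re_winding_number_fan: "Re (winding_number fan 0) = of_int (turn_sgn j0) / 4"
  and Re_winding_number_neg_fan: "Re (winding_number (\<lambda>l. - fan l) 0) = of_int (turn_sgn j0) / 4"
  using Re_winding_number_off_branch_cut[OF continuous_on_fan fan_off_branch_cut, of 1]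
    Re_winding_number_off_branch_cut[OF continuous_on_fan fan_off_branch_cut, of "-1"]
  by (simp_all add: Arg_fan)

lemma edge_path_subpath:
  assumes "x \<in> {0..1}"
  shows "subpath (of_nat i / (real n - 1)) (of_nat (i + 1) / (real n - 1)) edge_path x =
    linepath (edge (j0 + int i)) (edge (j0 + int i + 1)) x"
proof -
  have n: "real n - 1 > 0" using n_ge_4 by simp
  have "(of_nat (i + 1) / M - of_nat i / M) * x + of_nat i / M = (x + of_nat i) / M"
    if "M > 0" for M :: real
    using that by (simp add: field_simps)
  from this[OF n] have "(of_nat (i + 1) / (real n - 1) - of_nat i / (real n - 1)) * x + of_nat i / (real n - 1)
      = (x + of_nat i) / (real n - 1)" .
  then have "subpath (of_nat i / (real n - 1)) (of_nat (i + 1) / (real n - 1)) edge_path x =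
      edge_path ((x + of_nat i) / (real n - 1))"
    by (simp only: subpath_def)
  also have "\<dots> = boundary ((of_int (j0 + int i + 1) + x) / real n) - boundary ((of_int (j0 + int i) + x) / real n)"
  proof -
    have "t0 + (x + of_nat i) / (real n - 1) * (1 - dt) = (of_int (j0 + int i) + x) / real n"
      using n n_pos by (simp add: t0_def dt_def field_simps)
    moreover have "(of_int (j0 + int i) + x) / real n + dt = (of_int (j0 + int i + 1) + x) / real n"
      using n_pos by (simp add: dt_def field_simps)
    ultimately show ?thesis by (simp add: edge_path_def)
  qed
  also have "\<dots> = linepath (edge (j0 + int i)) (edge (j0 + int i + 1)) x"
    using assms unfolding atLeastAtMost_iff
    by (simp only: boundary_on_edge) (simp add: linepath_def edge_def scaleR_conv_of_real algebra_simps)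
  finally show ?thesis .
qed

lemma path_edge_path: "path edge_path"
  unfolding path_def edge_path_def
  by (intro continuous_intros continuous_on_compose2[OF continuous_on_boundary]) auto

lemma edge_path_nonzero: "0 \<notin> path_image edge_path"
proof
  assume "0 \<in> path_image edge_path"
  then obtain l where "l \<in> {0..1}" "edge_path l = 0" by (auto simp: path_image_def)
  moreover have "boundary (t0 + l * (1 - dt) + dt) \<noteq> boundary (t0 + l * (1 - dt))"
    using dt_pos dt_le by (intro boundary_neq) auto
  ultimately show False by (simp add: edge_path_def)
qed

lemma Re_winding_number_edge_path_prefix:
  "m \<le> n - 1 \<Longrightarrow> Re (winding_number (subpath 0 (of_nat m / (real n - 1)) edge_path) 0) =
    (\<Sum>i<m. of_int (turn_sgn (j0 + int i + 1))) / 4"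
proof (induction m)
  case 0
  have "edge_path 0 \<noteq> 0" using edge_path_nonzero by (auto simp: path_image_def)
  then show ?case by simp
next
  case (Suc m)
  have params: "of_nat m / (real n - 1) \<in> {0..1}" "of_nat (Suc m) / (real n - 1) \<in> {0..1}"
    using Suc.prems n_ge_4 by (auto simp: divide_simps)
  have "winding_number (subpath 0 (of_nat (Suc m) / (real n - 1)) edge_path) 0 =
      winding_number (subpath 0 (of_nat m / (real n - 1)) edge_path) 0 +
      winding_number (subpath (of_nat m / (real n - 1)) (of_nat (Suc m) / (real n - 1)) edge_path) 0"
    by (rule winding_number_subpath_combine[symmetric]) (use path_edge_path edge_path_nonzero params in auto)
  moreover have "Re (winding_number (subpath (of_nat m / (real n - 1)) (of_nat (Suc m) / (real n - 1)) edge_path) 0)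
      = of_int (turn_sgn (j0 + int m + 1)) / 4"
    by (rule Re_winding_number_turn[where c = 1]) (use edge_path_subpath[of _ m] in auto)
  ultimately show ?case using Suc by (simp add: add_divide_distrib)
qed

lemma Re_winding_number_edge_path:
  "Re (winding_number edge_path 0) = (\<Sum>i<n - 1. of_int (turn_sgn (j0 + int i + 1))) / 4"
  using Re_winding_number_edge_path_prefix[of "n - 1"] n_ge_4 by (simp add: of_nat_diff)

lemma secant_along_sides:
  "secant \<circ> linepath (t0, t0 + dt) (t0, t0 + 1 - dt) = fan"
  "secant \<circ> linepath (t0 + dt, t0 + 1) (t0 + 1 - dt, t0 + 1) = (\<lambda>l. - fan l)"
  "secant \<circ> linepath (t0 + 1 - dt, t0 + 1) (t0, t0 + dt) = reversepath edge_path"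
  using boundary_periodic1[of t0]
  by (auto simp: fan_def edge_path_def secant_def linepath_def reversepath_def algebra_simps)

lemma Re_winding_number_secant_at_corner:
  "Re (winding_number (secant \<circ> linepath (t0, t0 + 1 - dt) (t0 + dt, t0 + 1)) 0) = of_int (turn_sgn j0) / 4"
proof (rule Re_winding_number_turn[where c = "-1"])
  fix l :: real assume l: "l \<in> {0..1}"
  have "boundary (t0 + l * dt) = vertex j0 + of_real l * edge j0"
    using l boundary_on_edge[of l j0] by (simp add: t0_def dt_def add_divide_distrib)
  moreover have "boundary (t0 + 1 - dt + l * dt) = vertex (j0 - 1) + of_real l * edge (j0 - 1)"
  proof -
    have "boundary (t0 + 1 - dt + l * dt) = boundary (t0 - dt + l * dt)"
      using boundary_periodic1[of "t0 - dt + l * dt"] by (simp add: algebra_simps)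
    also have "t0 - dt + l * dt = (of_int (j0 - 1) + l) / real n"
      using n_pos by (simp add: t0_def dt_def field_simps)
    finally show ?thesis using l boundary_on_edge[of l "j0 - 1"] by simp
  qed
  moreover have "vertex j0 = vertex (j0 - 1) + edge (j0 - 1)"
    by (simp add: edge_def)
  ultimately show "(secant \<circ> linepath (t0, t0 + 1 - dt) (t0 + dt, t0 + 1)) l =
      - 1 * linepath (edge (j0 - 1)) (edge j0) l"
    by (simp add: secant_def linepath_def scaleR_conv_of_real algebra_simps)
qed simp

lemma turn_sgn_sum_from_bottom_left: "(\<Sum>i<n. turn_sgn (j0 + int i)) = 4 * turn_sgn j0"
proof -
  have "(t0, t0 + dt) \<in> secant_domain" "(t0, t0 + 1 - dt) \<in> secant_domain"
    "(t0 + dt, t0 + 1) \<in> secant_domain" "(t0 + 1 - dt, t0 + 1) \<in> secant_domain"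
    using dt_pos dt_le by (auto simp: secant_domain_def)
  from winding_number_secant_quadrilateral[OF this]
  have "0 = Re (winding_number fan 0)
      + Re (winding_number (secant \<circ> linepath (t0, t0 + 1 - dt) (t0 + dt, t0 + 1)) 0)
      + Re (winding_number (\<lambda>l. - fan l) 0) - Re (winding_number edge_path 0)"
    unfolding secant_along_sides winding_number_reversepath[OF path_edge_path edge_path_nonzero]
    by (metis minus_complex.sel(1) plus_complex.sel(1) uminus_complex.sel(1) zero_complex.sel(1)
        diff_conv_add_uminus)
  then have "real_of_int (\<Sum>i<n - 1. turn_sgn (j0 + int i + 1)) = of_int (3 * turn_sgn j0)"
    unfolding Re_winding_number_fan Re_winding_number_neg_fan Re_winding_number_secant_at_corner
      Re_winding_number_edge_path
    by simp
  then have "(\<Sum>i<n - 1. turn_sgn (j0 + int i + 1)) = 3 * turn_sgn j0"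
    by (simp only: of_int_eq_iff)
  moreover have "(\<Sum>i<n. turn_sgn (j0 + int i)) = (\<Sum>i<Suc (n - 1). turn_sgn (j0 + int i))"
    using n_pos by simp
  moreover have "\<dots> = turn_sgn j0 + (\<Sum>i<n - 1. turn_sgn (j0 + int i + 1))"
    by (subst sum.lessThan_Suc_shift) (simp add: ac_simps)
  ultimately show ?thesis by simp
qed

end

section \<open>Orientation: winding numbers around unit cells\<close>

context orth_polygon
begin

lemma boundary_in_path_image: "boundary t \<in> path_image boundary"
proof -
  have "boundary t = boundary (frac t)"
    using boundary_periodic[of "frac t" "\<lfloor>t\<rfloor>"] by (simp add: frac_def)
  then show ?thesis
    unfolding path_image_def by (auto intro!: imageI simp: frac_lt_1 less_imp_le)
qed

definition cell_centre :: "int \<Rightarrow> int \<Rightarrow> complex" where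
  "cell_centre a b = Complex (of_int a + 1 / 2) (of_int b + 1 / 2)"

definition cell_winding :: "int \<Rightarrow> int \<Rightarrow> real" where
  "cell_winding a b = Re (winding_number boundary (cell_centre a b))"

lemma cell_centre_not_on_boundary: "cell_centre a b \<notin> path_image boundary"
proof
  assume "cell_centre a b \<in> path_image boundary"
  then obtain t where "boundary t = cell_centre a b" by (auto simp: path_image_def)
  with boundary_on_grid_line[of t] show False
    using half_integer_neq_integer[of a] half_integer_neq_integer[of b] by (auto simp: cell_centre_def)
qed

lemma cell_winding_nonzero_eq:
  assumes "cell_winding a b \<noteq> 0" "cell_winding a' b' \<noteq> 0"
  shows "cell_winding a b = cell_winding a' b'"
proof -
  have inside: "cell_centre x y \<in> inside (path_image boundary)" if "cell_winding x y \<noteq> 0" for x y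
  proof (rule ccontr)
    assume "cell_centre x y \<notin> inside (path_image boundary)"
    then have "cell_centre x y \<in> outside (path_image boundary)"
      using cell_centre_not_on_boundary inside_Un_outside by blast
    then have "winding_number boundary (cell_centre x y) = 0"
      by (rule winding_number_zero_in_outside[OF path_boundary boundary_loop])
    with that show False by (simp add: cell_winding_def)
  qed
  show ?thesis
    using simple_closed_path_winding_number_inside[OF simple_path_boundary]
      inside[OF assms(1)] inside[OF assms(2)]
    by (metis cell_winding_def)
qed

text \<open>The boundary from \<open>vertex (k + 1)\<close> once around to \<open>vertex (k + n) = vertex k\<close>.\<close>

definition boundary_after :: "int \<Rightarrow> real \<Rightarrow> complex" where
  "boundary_after k u = boundary ((of_int k + 1 + u * (real n - 1)) / real n)"

lemma path_boundary_after: "path (boundary_after k)"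
  unfolding path_def boundary_after_def using n_pos
  by (intro continuous_on_compose2[OF continuous_on_boundary] continuous_intros) auto

lemma boundary_after_ends:
  "pathstart (boundary_after k) = vertex (k + 1)" "pathfinish (boundary_after k) = vertex k"
proof -
  show "pathstart (boundary_after k) = vertex (k + 1)"
    using boundary_vertex[of "k + 1"] by (simp add: pathstart_def boundary_after_def)
  have "(of_int k + 1 + (real n - 1)) / real n = of_int k / real n + of_int 1"
    using n_pos by (simp add: field_simps)
  then show "pathfinish (boundary_after k) = vertex k"
    using boundary_vertex[of k] boundary_periodic1 by (simp add: pathfinish_def boundary_after_def)
qed

lemma linepath_edge_eq_boundary:
  assumes "t \<in> {0..1}"
  shows "linepath (vertex k) (vertex (k + 1)) t = boundary ((of_int k + t) / real n)"
proof -
  have "boundary ((of_int k + t) / real n) = vertex k + of_real t * edge k"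
    using assms by (simp add: boundary_on_edge)
  then show ?thesis by (simp add: linepath_def edge_def scaleR_conv_of_real algebra_simps)
qed

lemma path_image_edge_subset: "path_image (linepath (vertex k) (vertex (k + 1))) \<subseteq> path_image boundary"
  and path_image_boundary_after_subset: "path_image (boundary_after k) \<subseteq> path_image boundary"
  unfolding path_image_def[of "linepath (vertex k) (vertex (k + 1))"] path_image_def[of "boundary_after k"]
  using linepath_edge_eq_boundary boundary_in_path_image by (auto simp: boundary_after_def)

lemma winding_number_boundary_split:
  assumes "z \<notin> path_image boundary"
  shows "winding_number boundary z =
    winding_number (linepath (vertex k) (vertex (k + 1)) +++ boundary_after k) z"
proof -
  define \<gamma> where "\<gamma> t = boundary (of_int k / real n + t)" for t
  have dt: "0 \<le> 1 / real n" "1 / real n \<le> 1" using n_pos by auto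
  have path_\<gamma>: "path \<gamma>" unfolding path_def \<gamma>_def
    by (intro continuous_intros continuous_on_compose2[OF continuous_on_boundary]) auto
  have z\<gamma>: "z \<notin> path_image \<gamma>"
    using assms boundary_in_path_image by (auto simp: path_image_def \<gamma>_def)
  have "winding_number boundary z = winding_number \<gamma> z"
    unfolding \<gamma>_def using winding_number_shift_periodic[OF path_boundary boundary_periodic assms] ..
  also have "\<dots> = winding_number (subpath 0 (1 / real n) \<gamma>) z + winding_number (subpath (1 / real n) 1 \<gamma>) z"
    using winding_number_subpath_combine[OF path_\<gamma> z\<gamma>, of 0 "1 / real n" 1] dt by simp
  also have "winding_number (subpath 0 (1 / real n) \<gamma>) z = winding_number (linepath (vertex k) (vertex (k + 1))) z"
    by (rule winding_number_cong)
       (simp add: subpath_def \<gamma>_def linepath_edge_eq_boundary add_divide_distrib)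
  also have "winding_number (subpath (1 / real n) 1 \<gamma>) z = winding_number (boundary_after k) z"
  proof (rule winding_number_cong)
    fix u :: real
    have "of_int k / real n + ((1 - 1 / real n) * u + 1 / real n) = (of_int k + 1 + u * (real n - 1)) / real n"
      using n_pos by (simp add: field_simps)
    then show "subpath (1 / real n) 1 \<gamma> u = boundary_after k u"
      by (simp add: subpath_def \<gamma>_def boundary_after_def)
  qed
  also have "winding_number (linepath (vertex k) (vertex (k + 1))) z + \<dots> =
      winding_number (linepath (vertex k) (vertex (k + 1)) +++ boundary_after k) z"
    using assms path_image_edge_subset path_image_boundary_after_subset
    by (intro winding_number_join[symmetric]) (auto simp: path_boundary_after boundary_after_ends)
  finally show ?thesis .
qed

lemma edge_interior_not_after:
  assumes "0 < l" "l < 1"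
  shows "vertex k + of_real l * edge k \<notin> path_image (boundary_after k)"
proof
  assume "vertex k + of_real l * edge k \<in> path_image (boundary_after k)"
  then obtain u where u: "0 \<le> u" "u \<le> 1"
    and eq: "boundary ((of_int k + 1 + u * (real n - 1)) / real n) = boundary ((of_int k + l) / real n)"
    using boundary_on_edge[of l k] assms by (auto simp: path_image_def boundary_after_def)
  from eq obtain m :: int
    where "(of_int k + l) / real n - (of_int k + 1 + u * (real n - 1)) / real n = of_int m"
    by (rule boundary_eq_imp_int_diff)
  then have "((of_int k + l) - (of_int k + 1 + u * (real n - 1))) / real n = of_int m"
    by (simp only: diff_divide_distrib)
  then have "real n * of_int m = l - 1 - u * (real n - 1)"
    using n_pos by (simp add: divide_eq_eq algebra_simps)
  moreover have "0 \<le> u * (real n - 1)" "u * (real n - 1) \<le> real n - 1"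
    using u n_pos by (auto simp: mult_left_le_one_le)
  ultimately have "real n * (-1) < real n * of_int m" "real n * of_int m < real n * 0"
    using assms by linarith+
  then have "-1 < m" "m < 0"
    using n_pos by (simp_all only: mult_less_cancel_left_pos of_nat_0_less_iff)
  then show False by simp
qed

definition crosses :: "int \<Rightarrow> int \<Rightarrow> bool" where
  "crosses k b \<longleftrightarrow> vert k \<and> min (Y k) (Y (k + 1)) \<le> b \<and> b < max (Y k) (Y (k + 1))"

definition vdir :: "int \<Rightarrow> int" where "vdir k = sgn (Y (k + 1) - Y k)"

lemma crossing_point:
  assumes "crosses k b"
  obtains l where "0 < l" "l < 1" "vertex k + of_real l * edge k = Complex (of_int (X k)) (of_int b + 1 / 2)"
proof -
  have v: "X (k + 1) = X k" "Y (k + 1) \<noteq> Y k" using assms by (auto simp: crosses_def vert_def)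
  define l where "l = (of_int b + 1 / 2 - of_int (Y k)) / (of_int (Y (k + 1)) - of_int (Y k) :: real)"
  have "0 < l \<and> l < 1"
  proof (cases "Y k < Y (k + 1)")
    case True
    with assms have "(of_int (Y k) :: real) \<le> of_int b" "of_int b + 1 \<le> (of_int (Y (k + 1)) :: real)"
      by (auto simp: crosses_def)
    with True show ?thesis unfolding l_def by (auto simp: divide_simps)
  next
    case False
    with v have "Y (k + 1) < Y k" by linarith
    moreover from this assms have "(of_int (Y (k + 1)) :: real) \<le> of_int b" "of_int b + 1 \<le> (of_int (Y k) :: real)"
      by (auto simp: crosses_def)
    ultimately show ?thesis unfolding l_def by (auto simp: divide_simps)
  qed
  moreover have "vertex k + of_real l * edge k = Complex (of_int (X k)) (of_int b + 1 / 2)"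
    using v by (simp add: complex_eq_iff edge_def l_def)
  ultimately show ?thesis using that by blast
qed

lemma boundary_on_cell_link:
  assumes "boundary t \<in> closed_segment (cell_centre (a - 1) b) (cell_centre a b)"
  shows "boundary t = Complex (of_int a) (of_int b + 1 / 2)" "\<exists>k. crosses k b \<and> X k = a"
proof -
  obtain k l where kl: "0 \<le> l" "l < 1" "boundary t = vertex k + of_real l * edge k"
    by (rule boundary_cases)
  have w: "Im (boundary t) = of_int b + 1 / 2" "of_int a - 1 / 2 \<le> Re (boundary t)"
    "Re (boundary t) \<le> of_int a + 1 / 2"
    using assms by (auto simp: cell_centre_def closed_segment_same_Im closed_segment_eq_real_ivl)
  have "\<not> horiz k"
  proof
    assume "horiz k"
    then have "Im (boundary t) = of_int (Y k)" unfolding kl(3) by (simp add: edge_def horiz_def)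
    with w half_integer_neq_integer show False by metis
  qed
  then have "vert k" using horiz_or_vert by blast
  then have "Re (boundary t) = of_int (X k)" unfolding kl(3) by (simp add: edge_def vert_def)
  with w have "X k = a" by linarith
  with w \<open>Re (boundary t) = of_int (X k)\<close> show "boundary t = Complex (of_int a) (of_int b + 1 / 2)"
    by (simp add: complex_eq_iff)
  have "of_int (min (Y k) (Y (k + 1))) \<le> Im (boundary t)" "Im (boundary t) \<le> of_int (max (Y k) (Y (k + 1)))"
    unfolding kl(3) Im_point_on_edge using kl(1,2) by (auto intro!: convex_bound_le convex_bound_ge)
  with w have "min (Y k) (Y (k + 1)) \<le> b" "b < max (Y k) (Y (k + 1))"
    by linarith+
  with \<open>vert k\<close> \<open>X k = a\<close> show "\<exists>k. crosses k b \<and> X k = a" by (auto simp: crosses_def)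
qed

lemma cell_link_avoids_boundary_after:
  assumes "crosses k b"
  shows "closed_segment (cell_centre (X k - 1) b) (cell_centre (X k) b) \<inter> path_image (boundary_after k) = {}"
proof -
  obtain l where l: "0 < l" "l < 1" "vertex k + of_real l * edge k = Complex (of_int (X k)) (of_int b + 1 / 2)"
    using crossing_point[OF assms] .
  have False if "boundary t \<in> closed_segment (cell_centre (X k - 1) b) (cell_centre (X k) b)"
    "boundary t \<in> path_image (boundary_after k)" for t
    using boundary_on_cell_link(1)[OF that(1)] l(3) edge_interior_not_after[OF l(1,2), of k] that(2)
    by simp
  then show ?thesis by (force simp: path_image_def boundary_after_def)
qed

lemma cell_winding_jump:
  assumes "crosses k b"
  shows "cell_winding (X k - 1) b - cell_winding (X k) b = of_int (vdir k)"
proof -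
  have v: "X (k + 1) = X k" using assms by (simp add: crosses_def vert_def)
  have "min (Im (vertex k)) (Im (vertex (k + 1))) < of_int b + 1 / 2"
    "of_int b + 1 / 2 < max (Im (vertex k)) (Im (vertex (k + 1)))"
    using assms by (auto simp: crosses_def min_def max_def)
  then have "winding_number (linepath (vertex k) (vertex (k + 1)) +++ boundary_after k) (cell_centre (X k - 1) b)
      - winding_number (linepath (vertex k) (vertex (k + 1)) +++ boundary_after k) (cell_centre (X k) b)
      = of_real (sgn (Im (vertex (k + 1)) - Im (vertex k)))"
    using v cell_link_avoids_boundary_after[OF assms]
    by (intro winding_number_jump_across_vertical_segment[where x = "of_int (X k)"])
       (auto simp: path_boundary_after boundary_after_ends cell_centre_def)
  moreover have "sgn (Im (vertex (k + 1)) - Im (vertex k)) = of_int (vdir k)"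
    by (simp add: vdir_def sgn_if)
  ultimately show ?thesis
    unfolding cell_winding_def winding_number_boundary_split[OF cell_centre_not_on_boundary, of _ _ k]
    by (metis Re_complex_of_real minus_complex.sel(1))
qed

definition xmin :: int where "xmin = Min (X ` {0..<int n})"
definition xmax :: int where "xmax = Max (X ` {0..<int n})"
definition ymin :: int where "ymin = Min (Y ` {0..<int n})"
definition ymax :: int where "ymax = Max (Y ` {0..<int n})"

lemma X_bounds: "xmin \<le> X k \<and> X k \<le> xmax"
  and Y_bounds: "ymin \<le> Y k \<and> Y k \<le> ymax"
proof -
  have "k mod int n \<in> {0..<int n}" using n_pos by simp
  moreover have "X k = X (k mod int n)" "Y k = Y (k mod int n)"
    by (simp_all add: X_mod_cong[of k "k mod int n"] Y_mod_cong[of k "k mod int n"])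
  ultimately show "xmin \<le> X k \<and> X k \<le> xmax" "ymin \<le> Y k \<and> Y k \<le> ymax"
    unfolding xmin_def xmax_def ymin_def ymax_def by auto
qed

lemma Re_boundary_bounds: "of_int xmin \<le> Re (boundary t) \<and> Re (boundary t) \<le> of_int xmax"
proof -
  obtain k l where kl: "0 \<le> l" "l < 1" "boundary t = vertex k + of_real l * edge k"
    by (rule boundary_cases)
  then have "Re (boundary t) = (1 - l) * X k + l * X (k + 1)" "0 \<le> 1 - l" "0 \<le> l"
    unfolding kl(3) Re_point_on_edge by simp_all
  moreover have "of_int xmin \<le> (of_int (X i) :: real)" "(of_int (X i) :: real) \<le> of_int xmax" for i
    using X_bounds[of i] by simp_all
  ultimately show ?thesis
    by (auto intro!: convex_bound_le convex_bound_ge)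
qed

lemma cell_winding_left: "a < xmin \<Longrightarrow> cell_winding a b = 0"
proof -
  assume "a < xmin"
  have "winding_number boundary (cell_centre a b) = 0"
  proof (rule winding_number_zero_outside[OF path_boundary convex_halfspace_Re_ge boundary_loop])
    show "cell_centre a b \<notin> {z. of_int xmin \<le> Re z}"
      using \<open>a < xmin\<close> by (simp add: cell_centre_def)
    show "path_image boundary \<subseteq> {z. of_int xmin \<le> Re z}"
      using Re_boundary_bounds by (auto simp: path_image_def)
  qed
  then show ?thesis by (simp add: cell_winding_def)
qed

lemma cell_winding_right: "xmax \<le> a \<Longrightarrow> cell_winding a b = 0"
proof -
  assume "xmax \<le> a"
  have "winding_number boundary (cell_centre a b) = 0"
  proof (rule winding_number_zero_outside[OF path_boundary convex_halfspace_Re_le boundary_loop])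
    show "cell_centre a b \<notin> {z. Re z \<le> of_int xmax}"
      using \<open>xmax \<le> a\<close> by (simp add: cell_centre_def)
    show "path_image boundary \<subseteq> {z. Re z \<le> of_int xmax}"
      using Re_boundary_bounds by (auto simp: path_image_def)
  qed
  then show ?thesis by (simp add: cell_winding_def)
qed

lemma cell_winding_no_crossing:
  assumes "\<And>k. crosses k b \<Longrightarrow> X k \<noteq> a"
  shows "cell_winding (a - 1) b = cell_winding a b"
proof -
  define S where "S = closed_segment (cell_centre (a - 1) b) (cell_centre a b)"
  have "S \<inter> path_image boundary = {}"
    using boundary_on_cell_link(2) assms by (force simp: S_def path_image_def)
  then have "winding_number boundary (cell_centre (a - 1) b) = winding_number boundary (cell_centre a b)"
    by (intro winding_number_eq[OF path_boundary boundary_loop _ _ _ _, of _ S]) (auto simp: S_def)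
  then show ?thesis by (simp add: cell_winding_def)
qed

definition crossing_edges :: "int \<Rightarrow> nat set" where
  "crossing_edges b = {k. k < n \<and> crosses (int k) b}"

lemma finite_crossing_edges: "finite (crossing_edges b)"
  by (simp add: crossing_edges_def)

lemma crossing_edges_X_inj:
  assumes "k \<in> crossing_edges b" "k' \<in> crossing_edges b" "X (int k) = X (int k')"
  shows "k = k'"
proof -
  obtain l where l: "0 < l" "l < 1"
    "vertex (int k) + of_real l * edge (int k) = Complex (of_int (X (int k))) (of_int b + 1 / 2)"
    using assms(1) crossing_point by (auto simp: crossing_edges_def)
  obtain l' where l': "0 < l'" "l' < 1"
    "vertex (int k') + of_real l' * edge (int k') = Complex (of_int (X (int k'))) (of_int b + 1 / 2)"
    using assms(2) crossing_point by (auto simp: crossing_edges_def)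
  have "int k mod int n = int k' mod int n"
    using point_on_edge_unique[of l l' "int k" "int k'"] l l' assms(3) by auto
  with assms(1,2) show ?thesis by (auto simp: crossing_edges_def)
qed

lemma crosses_list_index: "crosses (int (list_index k)) b \<longleftrightarrow> crosses k b"
  and X_list_index: "X (int (list_index k)) = X k"
proof -
  have "int (list_index k) mod int n = k mod int n" "(int (list_index k) + 1) mod int n = (k + 1) mod int n"
    by (simp_all add: int_list_index mod_add_left_eq)
  then show "crosses (int (list_index k)) b \<longleftrightarrow> crosses k b" "X (int (list_index k)) = X k"
    unfolding crosses_def vert_def by (metis X_mod_cong Y_mod_cong)+
qed

lemma cell_winding_step:
  "cell_winding a b - cell_winding (a + 1) b =
    of_int (\<Sum>k\<in>crossing_edges b. if X (int k) = a + 1 then vdir (int k) else 0)"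
proof (cases "\<exists>k\<in>crossing_edges b. X (int k) = a + 1")
  case True
  then obtain k where k: "k \<in> crossing_edges b" "X (int k) = a + 1" by blast
  have "(\<Sum>k'\<in>crossing_edges b. if X (int k') = a + 1 then vdir (int k') else 0) =
      (\<Sum>k'\<in>crossing_edges b. if k' = k then vdir (int k') else 0)"
    using crossing_edges_X_inj k by (intro sum.cong) auto
  also have "\<dots> = vdir (int k)" using k(1) finite_crossing_edges by simp
  finally show ?thesis
    using cell_winding_jump[of "int k" b] k by (simp add: crossing_edges_def)
next
  case False
  have "cell_winding (a + 1 - 1) b = cell_winding (a + 1) b"
  proof (rule cell_winding_no_crossing)
    fix k assume "crosses k b"
    then have "list_index k \<in> crossing_edges b"
      by (simp add: crossing_edges_def crosses_list_index list_index_less)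
    with False show "X k \<noteq> a + 1" by (auto simp: X_list_index)
  qed
  with False show ?thesis by simp
qed

lemma cell_winding_row:
  "xmin - 1 \<le> a \<Longrightarrow>
    cell_winding a b = - of_int (\<Sum>k\<in>crossing_edges b. if X (int k) \<le> a then vdir (int k) else 0)"
proof (induction a rule: int_ge_induct)
  case base
  have "\<not> X (int k) \<le> xmin - 1" for k using X_bounds[of "int k"] by simp
  then show ?case using cell_winding_left[of "xmin - 1" b] by simp
next
  case (step a)
  have "(\<Sum>k\<in>crossing_edges b. if X (int k) \<le> a + 1 then vdir (int k) else 0) =
      (\<Sum>k\<in>crossing_edges b. (if X (int k) \<le> a then vdir (int k) else 0) +
        (if X (int k) = a + 1 then vdir (int k) else 0))"
    by (intro sum.cong) auto
  with step.IH cell_winding_step[of a b] show ?case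
    by (simp add: sum.distrib)
qed

lemma sum_cell_winding_row:
  "(\<Sum>a\<in>{xmin - 1..xmax}. cell_winding a b) = of_int (\<Sum>k\<in>crossing_edges b. vdir (int k) * X (int k))"
proof -
  define I where "I = {xmin - 1..xmax}"
  define K where "K = crossing_edges b"
  have "finite K" by (simp add: K_def finite_crossing_edges)
  have "(\<Sum>a\<in>I. if X (int k) \<le> a then vdir (int k) else 0) = vdir (int k) * (xmax - X (int k) + 1)" for k
  proof -
    have "{a\<in>I. X (int k) \<le> a} = {X (int k)..xmax}" using X_bounds[of "int k"] by (auto simp: I_def)
    then have "(\<Sum>a\<in>I. if X (int k) \<le> a then vdir (int k) else 0) = vdir (int k) * int (card {X (int k)..xmax})"
      by (simp add: sum.inter_filter[symmetric] I_def)
    also have "\<dots> = vdir (int k) * (xmax - X (int k) + 1)" using X_bounds[of "int k"] by simp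
    finally show ?thesis .
  qed
  then have "(\<Sum>a\<in>I. \<Sum>k\<in>K. if X (int k) \<le> a then vdir (int k) else 0) =
      (\<Sum>k\<in>K. vdir (int k) * (xmax - X (int k) + 1))"
    by (subst sum.swap) simp
  also have "\<dots> = (xmax + 1) * (\<Sum>k\<in>K. vdir (int k)) - (\<Sum>k\<in>K. vdir (int k) * X (int k))"
    by (simp add: sum_distrib_left sum_subtractf[symmetric] algebra_simps)
  finally have "(\<Sum>a\<in>I. \<Sum>k\<in>K. if X (int k) \<le> a then vdir (int k) else 0) =
      (xmax + 1) * (\<Sum>k\<in>K. vdir (int k)) - (\<Sum>k\<in>K. vdir (int k) * X (int k))" .
  moreover have "(\<Sum>k\<in>K. vdir (int k)) = 0"
  proof -
    have "xmin - 1 \<le> xmax" using X_bounds[of 0] by simp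
    then have "real_of_int (\<Sum>k\<in>K. vdir (int k)) = 0"
      using cell_winding_row[of xmax b] cell_winding_right[of xmax b] X_bounds
      by (simp add: K_def)
    then show ?thesis by (simp only: of_int_eq_0_iff)
  qed
  ultimately show ?thesis
    using cell_winding_row X_bounds by (simp add: I_def K_def sum_negf flip: of_int_sum)
qed

lemma sum_crossing_edges_column:
  "(\<Sum>b\<in>{ymin..<ymax}. \<Sum>k\<in>crossing_edges b. vdir (int k) * X (int k)) =
    (\<Sum>k<n. X (int k) * (Y (int k + 1) - Y (int k)))"
proof -
  have "(\<Sum>b\<in>{ymin..<ymax}. \<Sum>k\<in>crossing_edges b. vdir (int k) * X (int k)) =
      (\<Sum>b\<in>{ymin..<ymax}. \<Sum>k<n. if crosses (int k) b then vdir (int k) * X (int k) else 0)"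
  proof (rule sum.cong[OF refl])
    fix b
    have "crossing_edges b = {k\<in>{..<n}. crosses (int k) b}" by (auto simp: crossing_edges_def)
    then show "(\<Sum>k\<in>crossing_edges b. vdir (int k) * X (int k)) =
        (\<Sum>k<n. if crosses (int k) b then vdir (int k) * X (int k) else 0)"
      using sum.inter_filter[of "{..<n}" "\<lambda>k. vdir (int k) * X (int k)" "\<lambda>k. crosses (int k) b"]
      by simp
  qed
  also have "\<dots> = (\<Sum>k<n. \<Sum>b\<in>{ymin..<ymax}. if crosses (int k) b then vdir (int k) * X (int k) else 0)"
    by (rule sum.swap)
  also have "\<dots> = (\<Sum>k<n. X (int k) * (Y (int k + 1) - Y (int k)))"
  proof (intro sum.cong refl)
    fix k
    show "(\<Sum>b\<in>{ymin..<ymax}. if crosses (int k) b then vdir (int k) * X (int k) else 0) =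
        X (int k) * (Y (int k + 1) - Y (int k))"
    proof (cases "vert (int k)")
      case True
      have "{b\<in>{ymin..<ymax}. crosses (int k) b} = {min (Y (int k)) (Y (int k + 1))..<max (Y (int k)) (Y (int k + 1))}"
        using Y_bounds[of "int k"] Y_bounds[of "int k + 1"] True by (auto simp: crosses_def)
      with True show ?thesis
        by (simp add: sum.inter_filter[symmetric] vdir_def vert_def sgn_if)
    next
      case False
      then have "horiz (int k)" using horiz_or_vert by blast
      with False show ?thesis by (simp add: crosses_def horiz_def)
    qed
  qed
  finally show ?thesis .
qed

lemma signed_area2_eq: "signed_area2 P = 2 * (\<Sum>k<n. X (int k) * (Y (int k + 1) - Y (int k)))"
proof -
  have summand: "X (int k) * Y (int k + 1) - X (int k + 1) * Y (int k) =
      2 * (X (int k) * (Y (int k + 1) - Y (int k))) - (X (int (Suc k)) * Y (int (Suc k)) - X (int k) * Y (int k))"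
    for k
    using horiz_or_vert[of "int k"] by (auto simp: horiz_def vert_def algebra_simps)
  have "(\<Sum>k<n. X (int (Suc k)) * Y (int (Suc k)) - X (int k) * Y (int k)) = X (int n) * Y (int n) - X 0 * Y 0"
    using sum_lessThan_telescope[of "\<lambda>k. X (int k) * Y (int k)" n] by simp
  also have "\<dots> = 0" by (simp add: X_mod_cong[of "int n" 0] Y_mod_cong[of "int n" 0])
  finally have telescope: "(\<Sum>k<n. X (int (Suc k)) * Y (int (Suc k)) - X (int k) * Y (int k)) = 0" .
  have "signed_area2 P = (\<Sum>k<n. X (int k) * Y (int k + 1) - X (int k + 1) * Y (int k))"
    by (simp add: signed_area2_def length_P X_def Y_def)
  also have "\<dots> = (\<Sum>k<n. 2 * (X (int k) * (Y (int k + 1) - Y (int k)))) -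
      (\<Sum>k<n. X (int (Suc k)) * Y (int (Suc k)) - X (int k) * Y (int k))"
    unfolding summand by (rule sum_subtractf)
  also have "\<dots> = 2 * (\<Sum>k<n. X (int k) * (Y (int k + 1) - Y (int k)))"
    unfolding telescope by (simp add: sum_distrib_left)
  finally show ?thesis .
qed

lemma signed_area2_cell_windings:
  "real_of_int (signed_area2 P) = 2 * (\<Sum>b\<in>{ymin..<ymax}. \<Sum>a\<in>{xmin - 1..xmax}. cell_winding a b)"
  by (simp add: signed_area2_eq sum_cell_winding_row sum_crossing_edges_column flip: of_int_sum)

end

context orth_polygon_bottom_left
begin

lemma cell_winding_bottom_left: "cell_winding (X j0) (Y j0) = of_int (turn_sgn j0)"
proof -
  have "\<not> X (int k) \<le> X j0 - 1" if "k \<in> crossing_edges (Y j0)" for k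
  proof -
    from that have c: "crosses (int k) (Y j0)" by (simp add: crossing_edges_def)
    then obtain v where v: "v = int k \<or> v = int k + 1" "Y v \<le> Y j0"
      by (auto simp: crosses_def min_def split: if_splits)
    moreover have "Y j0 \<le> Y v \<and> (Y v = Y j0 \<longrightarrow> X j0 \<le> X v)"
      using bottom_left by (simp add: bottom_left_def)
    ultimately have "X j0 \<le> X v" by auto
    moreover have "X v = X (int k)" using v c by (auto simp: crosses_def vert_def)
    ultimately show ?thesis by simp
  qed
  then have "cell_winding (X j0 - 1) (Y j0) = 0"
    using cell_winding_row[of "X j0 - 1" "Y j0"] X_bounds[of j0] by simp
  moreover have "cell_winding (X j0 - 1) (Y j0) - cell_winding (X j0) (Y j0) = - of_int (turn_sgn j0)"
    using bottom_left_corner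
  proof (elim disjE conjE)
    assume "vert (j0 - 1)" "Y j0 < Y (j0 - 1)" "turn_sgn j0 = 1"
    moreover from this have "crosses (j0 - 1) (Y j0)" "X (j0 - 1) = X j0" "vdir (j0 - 1) = -1"
      by (auto simp: crosses_def vert_def vdir_def)
    ultimately show ?thesis using cell_winding_jump[of "j0 - 1" "Y j0"] by simp
  next
    assume "vert j0" "Y j0 < Y (j0 + 1)" "turn_sgn j0 = -1"
    moreover from this have "crosses j0 (Y j0)" "vdir j0 = 1"
      by (auto simp: crosses_def vdir_def)
    ultimately show ?thesis using cell_winding_jump[of j0 "Y j0"] by simp
  qed
  ultimately show ?thesis by simp
qed

lemma sgn_signed_area2: "sgn (signed_area2 P) = turn_sgn j0"
proof -
  define s where "s = real_of_int (turn_sgn j0)"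
  have s: "s = 1 \<or> s = -1" using turn_sgn_cases[of j0] by (auto simp: s_def)
  have nonneg: "0 \<le> s * cell_winding a b" for a b
  proof (cases "cell_winding a b = 0")
    case False
    moreover have "cell_winding (X j0) (Y j0) \<noteq> 0"
      using cell_winding_bottom_left turn_sgn_cases[of j0] by auto
    ultimately have "cell_winding a b = cell_winding (X j0) (Y j0)"
      by (rule cell_winding_nonzero_eq)
    then show ?thesis using cell_winding_bottom_left s by (auto simp: s_def)
  qed simp
  have in_range: "X j0 \<in> {xmin - 1..xmax}" "Y j0 \<in> {ymin..<ymax}"
    using X_bounds[of j0] Y_bounds[of j0] bottom_left_corner Y_bounds[of "j0 - 1"] Y_bounds[of "j0 + 1"]
    by auto
  have "1 = s * cell_winding (X j0) (Y j0)"
    using cell_winding_bottom_left s by (auto simp: s_def)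
  also have "\<dots> \<le> (\<Sum>a\<in>{xmin - 1..xmax}. s * cell_winding a (Y j0))"
    using nonneg in_range by (intro member_le_sum) auto
  also have "\<dots> \<le> (\<Sum>b\<in>{ymin..<ymax}. \<Sum>a\<in>{xmin - 1..xmax}. s * cell_winding a b)"
    using nonneg in_range
    by (intro member_le_sum[where f = "\<lambda>b. \<Sum>a\<in>{xmin - 1..xmax}. s * cell_winding a b"] sum_nonneg) auto
  also have "\<dots> = s * (\<Sum>b\<in>{ymin..<ymax}. \<Sum>a\<in>{xmin - 1..xmax}. cell_winding a b)"
    by (simp add: sum_distrib_left)
  also have "\<dots> = s * of_int (signed_area2 P) / 2"
    by (simp add: signed_area2_cell_windings)
  finally have "0 < s * of_int (signed_area2 P)" by simp
  with s show ?thesis by (auto simp: s_def zero_less_mult_iff sgn_if)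
qed

lemma turn_sgn_sum: "(\<Sum>i<n. turn_sgn (int i)) = 4 * turn_sgn j0"
  using turn_sgn_sum_from_bottom_left sum_shift_mod[of n turn_sgn j0, OF turn_sgn_mod_cong] by simp

end

section \<open>Counting convex vertices\<close>

context orth_polygon
begin

lemma turn_sgn_sum_sgn_signed_area2:
  "(\<Sum>i<n. turn_sgn (int i)) = 4 * sgn (signed_area2 P)"
  and sgn_signed_area2_cases: "sgn (signed_area2 P) = 1 \<or> sgn (signed_area2 P) = -1"
proof -
  obtain j0 where "bottom_left j0" using bottom_left_exists by blast
  then interpret orth_polygon_bottom_left P n j0 by unfold_locales
  show "(\<Sum>i<n. turn_sgn (int i)) = 4 * sgn (signed_area2 P)"
    "sgn (signed_area2 P) = 1 \<or> sgn (signed_area2 P) = -1"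
    using turn_sgn_sum sgn_signed_area2 turn_sgn_cases by simp_all
qed

lemma convex_vertex_iff: "convex_vertex P i \<longleftrightarrow> turn_sgn i = sgn (signed_area2 P)"
  and concave_vertex_iff: "concave_vertex P i \<longleftrightarrow> turn_sgn i = - sgn (signed_area2 P)"
  using sgn_signed_area2_cases turn_sgn_cases[of i]
  by (auto simp: convex_vertex_def concave_vertex_def turn_sgn_def sgn_if zero_less_mult_iff
      mult_less_0_iff split: if_splits)

lemma convex_if_not_concave: "\<not> concave_vertex P i \<Longrightarrow> convex_vertex P i"
  using sgn_signed_area2_cases turn_sgn_cases[of i] by (auto simp: convex_vertex_iff concave_vertex_iff)

lemma convex_vertex_mod_cong:
  "i mod int n = j mod int n \<Longrightarrow> convex_vertex P i \<longleftrightarrow> convex_vertex P j"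
  using turn_sgn_mod_cong[of i j] by (simp add: convex_vertex_iff)

lemma card_convex_vertices: "2 * int (card {i. i < n \<and> convex_vertex P (int i)}) = int n + 4"
proof -
  define C where "C = {i. i < n \<and> convex_vertex P (int i)}"
  define \<tau> where "\<tau> = sgn (signed_area2 P)"
  have C: "C \<subseteq> {..<n}" by (auto simp: C_def)
  have "4 * \<tau> = (\<Sum>i<n. turn_sgn (int i))"
    by (simp add: \<tau>_def turn_sgn_sum_sgn_signed_area2)
  also have "\<dots> = (\<Sum>i<n. if i \<in> C then \<tau> else - \<tau>)"
  proof (rule sum.cong[OF refl])
    fix i assume "i \<in> {..<n}"
    then show "turn_sgn (int i) = (if i \<in> C then \<tau> else - \<tau>)"
      using turn_sgn_cases[of "int i"] sgn_signed_area2_cases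
      by (auto simp: C_def \<tau>_def convex_vertex_iff)
  qed
  also have "\<dots> = int (card C) * \<tau> - int (card ({..<n} - C)) * \<tau>"
    using C by (simp add: sum.If_cases Int_absorb1 Diff_eq)
  also have "card ({..<n} - C) = n - card C"
    using C by (simp add: card_Diff_subset finite_subset)
  finally have "4 * \<tau> = \<tau> * (2 * int (card C) - int n)"
    using card_mono[OF _ C] by (simp add: of_nat_diff algebra_simps)
  then show ?thesis
    using sgn_signed_area2_cases by (auto simp: C_def \<tau>_def)
qed

lemma convex_vertices_subset_knob_ends:
  assumes "\<forall>i<n. \<not> nonknob_convex P (int i)"
  shows "{i. i < n \<and> convex_vertex P (int i)} \<subseteq> knobs P \<union> (\<lambda>j. (j + 1) mod n) ` knobs P"
proof
  fix i assume "i \<in> {i. i < n \<and> convex_vertex P (int i)}"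
  then have i: "i < n" "convex_vertex P (int i)" by simp_all
  with assms have "convex_vertex P (int i - 1) \<or> convex_vertex P (int i + 1)"
    by (auto simp: nonknob_convex_def intro: convex_if_not_concave)
  then show "i \<in> knobs P \<union> (\<lambda>j. (j + 1) mod n) ` knobs P"
  proof
    assume "convex_vertex P (int i + 1)"
    with i have "i \<in> knobs P" by (simp add: knobs_def length_P)
    then show ?thesis by blast
  next
    assume prev: "convex_vertex P (int i - 1)"
    define j where "j = list_index (int i - 1)"
    have "int j mod int n = (int i - 1) mod int n" "(int j + 1) mod int n = int i mod int n"
      by (simp_all add: j_def int_list_index mod_add_left_eq)
    then have "convex_vertex P (int j)" "convex_vertex P (int j + 1)"
      using prev i(2) convex_vertex_mod_cong by blast+
    then have "j \<in> knobs P" by (simp add: knobs_def length_P j_def list_index_less)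
    moreover have "(j + 1) mod n = i"
      using list_index_plus1[of "int i - 1"] i(1) by (simp add: j_def list_index_def)
    ultimately show ?thesis by force
  qed
qed

end

theorem lemma6p8:
  fixes P :: "(int \<times> int) list" and k :: nat
  assumes "simple_orth_polygon P"
    and "card (knobs P) \<le> k"
    and "\<forall>i<length P. \<not> nonknob_convex P (int i)"
  shows "int (length P) \<le> 4 * int k - 4"
proof -
  interpret orth_polygon P "length P" using assms(1) by unfold_locales simp_all
  have finite_knobs: "finite (knobs P)" by (simp add: knobs_def)
  have "card {i. i < length P \<and> convex_vertex P (int i)} \<le>
      card (knobs P \<union> (\<lambda>j. (j + 1) mod length P) ` knobs P)"
    using convex_vertices_subset_knob_ends[OF assms(3)] finite_knobs by (intro card_mono) auto
  also have "\<dots> \<le> card (knobs P) + card ((\<lambda>j. (j + 1) mod length P) ` knobs P)"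
    by (rule card_Un_le)
  also have "\<dots> \<le> 2 * card (knobs P)"
    using card_image_le[OF finite_knobs, of "\<lambda>j. (j + 1) mod length P"] by simp
  finally show ?thesis
    using card_convex_vertices assms(2) by linarith
qed

end
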